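(* Let $(w_s,\eta_s)$ be the soliton-like traveling wave (homoclinic solution) with parameters satisfying $\frac{\beta(\nu+1)}{2(\nu+2)\eta_\infty^{\nu+3}}<s^2<\frac{\beta}{\eta_\infty^{\nu+3}}$. Then the generalized eigenvalue problem $\kappa M''=\big[\gamma-\mu+\frac{s^2}{\mu-(\nu+2)\eta_s(z)^{-(\nu+3)}}\big]M$ on $\mathbb{R}$ has at most one eigenvalue $\mu<0$ with a nonzero eigenfunction $M\in L^2(\mathbb{R})$ (decaying with its derivative at $\pm\infty$). If such $\mu$ exists, it is an eigenvalue of $\mathcal{L}^s$ with eigenfunction $\big(M,\ sM\,(\mu-(\nu+2)\eta_s^{-(\nu+3)})^{-1}\big)^{tr}$.
   Context: Fix $\beta>0$, $\nu>-1$, $\kappa>0$, $\gamma=\beta/(\nu+2)$, $\eta_\infty>0$. The soliton-like traveling wave is a non-constant smooth pair $(w_s(z),\eta_s(z))$ with $\eta_s>0$, satisfying $s w_s+\eta_\infty^{-(\nu+2)}-\eta_s^{-(\nu+2)}=0$, $(\gamma-\kappa\partial_z^2)w_s+s(\eta_s-\eta_\infty)=0$, $w_s\to0$, $\eta_s\to\eta_\infty$ as $|z|\to\infty$. $\mathcal{L}^s=\begin{pmatrix}\gamma-\kappa\partial_z^2 & s\\ s & (\nu+2)\eta_s(z)^{-(\nu+3)}\end{pmatrix}$ on $L^2(\mathbb{R})^2$. *)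

theory Defs
  imports "HOL-Analysis.Analysis"
begin

definition smooth_real :: "(real \<Rightarrow> real) \<Rightarrow> bool" where
  "smooth_real f \<longleftrightarrow> (\<forall>n. (deriv ^^ n) f differentiable_on UNIV)"

definition sq_integrable :: "(real \<Rightarrow> real) \<Rightarrow> bool" where
  "sq_integrable f \<longleftrightarrow> f \<in> borel_measurable lborel \<and> integrable lborel (\<lambda>z. (f z)\<^sup>2)"

definition gam :: "real \<Rightarrow> real \<Rightarrow> real" where
  "gam \<beta> \<nu> = \<beta> / (\<nu> + 2)"

definition soliton ::
  "real \<Rightarrow> real \<Rightarrow> real \<Rightarrow> real \<Rightarrow> real \<Rightarrow> (real \<Rightarrow> real) \<Rightarrow> (real \<Rightarrow> real) \<Rightarrow> bool" where
  "soliton \<beta> \<nu> \<kappa> \<eta>inf s w \<eta> \<longleftrightarrow>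
     smooth_real w \<and> smooth_real \<eta> \<and>
     (\<forall>z. \<eta> z > 0) \<and>
     (\<exists>z1 z2. (w z1, \<eta> z1) \<noteq> (w z2, \<eta> z2)) \<and>
     (\<forall>z. s * w z + \<eta>inf powr (-(\<nu>+2)) - \<eta> z powr (-(\<nu>+2)) = 0) \<and>
     (\<forall>z. gam \<beta> \<nu> * w z - \<kappa> * (deriv (deriv w)) z + s * (\<eta> z - \<eta>inf) = 0) \<and>
     (w \<longlongrightarrow> 0) at_top \<and> (w \<longlongrightarrow> 0) at_bot \<and>
     (\<eta> \<longlongrightarrow> \<eta>inf) at_top \<and> (\<eta> \<longlongrightarrow> \<eta>inf) at_bot"

definition gen_eigenfun ::
  "real \<Rightarrow> real \<Rightarrow> real \<Rightarrow> real \<Rightarrow> (real \<Rightarrow> real) \<Rightarrow> real \<Rightarrow> (real \<Rightarrow> real) \<Rightarrow> bool" where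
  "gen_eigenfun \<beta> \<nu> \<kappa> s \<eta> \<mu> M \<longleftrightarrow>
     (\<exists>M' M''. (\<forall>z. (M has_real_derivative M' z) (at z)) \<and>
               (\<forall>z. (M' has_real_derivative M'' z) (at z)) \<and>
               (\<forall>z. \<kappa> * M'' z =
                      (gam \<beta> \<nu> - \<mu> + s\<^sup>2 / (\<mu> - (\<nu>+2) * \<eta> z powr (-(\<nu>+3)))) * M z) \<and>
               (M \<longlongrightarrow> 0) at_top \<and> (M \<longlongrightarrow> 0) at_bot \<and>
               (M' \<longlongrightarrow> 0) at_top \<and> (M' \<longlongrightarrow> 0) at_bot) \<and>
     sq_integrable M \<and> M \<noteq> (\<lambda>z. 0)"

definition Ls_eigenpair ::
  "real \<Rightarrow> real \<Rightarrow> real \<Rightarrow> real \<Rightarrow> (real \<Rightarrow> real) \<Rightarrow> real \<Rightarrow> (real \<Rightarrow> real) \<Rightarrow> (real \<Rightarrow> real) \<Rightarrow> bool" where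
  "Ls_eigenpair \<beta> \<nu> \<kappa> s \<eta> \<mu> U V \<longleftrightarrow>
     (\<exists>U' U''. (\<forall>z. (U has_real_derivative U' z) (at z)) \<and>
               (\<forall>z. (U' has_real_derivative U'' z) (at z)) \<and>
               sq_integrable U' \<and> sq_integrable U'' \<and>
               (\<forall>z. gam \<beta> \<nu> * U z - \<kappa> * U'' z + s * V z = \<mu> * U z) \<and>
               (\<forall>z. s * U z + (\<nu>+2) * \<eta> z powr (-(\<nu>+3)) * V z = \<mu> * V z)) \<and>
     sq_integrable U \<and> sq_integrable V \<and>
     (U, V) \<noteq> ((\<lambda>z. 0), (\<lambda>z. 0))"

end

theory Submission
  imports Defs
begin

text \<open>The derivative w' of the wave solves \<kappa> \<phi>'' = Q 0 \<phi>, the case \<mu> = 0 of the generalized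
  eigenvalue equation, and vanishes at exactly one point z0. Indeed, along the wave w, \<kappa> w'' and
  \<kappa> w'^2 / 2 are functions Wf, Ff, Gf of \<eta>. As Ff' is strictly monotone, Ff has at most two
  zeros, so by Rolle Gf has at most one zero besides the limit e of \<eta>, and none in common with
  Ff. Hence w^2 takes one value, its maximum, at all critical points. Between two critical points
  the minimum of w^2 would again be critical, so w^2 would be constant there and \<eta> a common
  zero of Ff and Gf.

  For \<mu> < 0 the potential Q \<mu> lies strictly above Q 0 and decreases strictly in \<mu>. Sturm
  comparison, via the Wronskian on a nodal interval, therefore shows that an eigenfunction for
  \<mu> < 0 has one sign and does not vanish at z0, and that two such eigenfunctions for different
  \<mu> cannot coexist. Finally (M, s M / (\<mu> - \<theta>)) solves the eigenvalue equations of L^s by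
  construction, and M', M'' are square integrable because Q \<mu> is bounded.\<close>

lemma tendsto_at_infinity_real:
  fixes f :: "real \<Rightarrow> 'a::topological_space"
  assumes "(f \<longlongrightarrow> c) at_top" "(f \<longlongrightarrow> c) at_bot"
  shows "(f \<longlongrightarrow> c) at_infinity"
  using filterlim_sup[OF assms] by (simp add: at_infinity_eq_at_top_bot)

lemma bounded_range_if_tendsto_at_infinity:
  fixes f :: "real \<Rightarrow> real"
  assumes cont: "continuous_on UNIV f" and lim: "(f \<longlongrightarrow> c) at_infinity"
  shows "bounded (range f)"
proof -
  obtain N where N: "\<And>z. N \<le> \<bar>z\<bar> \<Longrightarrow> dist (f z) c < 1"
    using tendstoD[OF lim zero_less_one] by (auto simp: eventually_at_infinity)
  have "range f \<subseteq> f ` cball 0 N \<union> ball c 1"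
    using N by (force simp: dist_commute)
  moreover have "bounded (f ` cball 0 N)"
    by (intro compact_imp_bounded compact_continuous_image continuous_on_subset[OF cont]) auto
  ultimately show ?thesis
    by (meson bounded_Un bounded_ball bounded_subset)
qed

lemma attains_sup_if_tendsto_0_at_infinity:
  fixes f :: "real \<Rightarrow> real"
  assumes cont: "continuous_on UNIV f" and lim: "(f \<longlongrightarrow> 0) at_infinity" and pos: "0 < f p"
  shows "\<exists>z. \<forall>y. f y \<le> f z"
proof -
  obtain N where N: "\<And>z. N \<le> \<bar>z\<bar> \<Longrightarrow> \<bar>f z\<bar> < f p"
    using tendstoD[OF lim pos] by (auto simp: eventually_at_infinity)
  have p: "p \<in> cball 0 N"
    using N[of p] by force
  obtain z where z: "z \<in> cball 0 N" "\<And>y. y \<in> cball 0 N \<Longrightarrow> f y \<le> f z"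
    using continuous_attains_sup[OF compact_cball _ continuous_on_subset[OF cont]] p by blast
  have "f y \<le> f z" for y
    using N[of y] z(2)[of y] z(2)[OF p] by (cases "y \<in> cball 0 N") auto
  then show ?thesis by blast
qed

lemma pos_lower_bound_if_tendsto_at_infinity:
  fixes f :: "real \<Rightarrow> real"
  assumes cont: "continuous_on UNIV f" and lim: "(f \<longlongrightarrow> c) at_infinity"
    and c: "0 < c" and pos: "\<And>z. 0 < f z"
  shows "\<exists>m>0. \<forall>z. m \<le> f z"
proof -
  obtain N where N: "\<And>z. N \<le> \<bar>z\<bar> \<Longrightarrow> \<bar>f z - c\<bar> < c / 2"
    using tendstoD[OF lim, of "c / 2"] c by (auto simp: eventually_at_infinity dist_real_def)
  obtain x where x: "\<And>y. y \<in> cball 0 \<bar>N\<bar> \<Longrightarrow> f x \<le> f y"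
  proof -
    have "cball 0 \<bar>N\<bar> \<noteq> {}" by simp
    then show thesis
      using continuous_attains_inf[OF compact_cball _ continuous_on_subset[OF cont]] that by blast
  qed
  have "min (c / 2) (f x) \<le> f y" for y
  proof (cases "y \<in> cball 0 \<bar>N\<bar>")
    case True
    then show ?thesis using x[of y] by simp
  next
    case False
    then have "\<bar>f y - c\<bar> < c / 2" using N[of y] by simp
    then show ?thesis unfolding abs_less_iff min_le_iff_disj by linarith
  qed
  then show ?thesis
    using c pos[of x] by (intro exI[of _ "min (c / 2) (f x)"]) auto
qed

lemma constant_sign_if_nonzero:
  fixes g :: "real \<Rightarrow> real"
  assumes "connected S" "continuous_on S g" and nz: "\<And>x. x \<in> S \<Longrightarrow> g x \<noteq> 0"
  shows "(\<forall>x\<in>S. 0 < g x) \<or> (\<forall>x\<in>S. g x < 0)"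
proof (rule ccontr)
  assume "\<not> ?thesis"
  then obtain x y where xy: "x \<in> S" "y \<in> S" "g x < 0" "0 < g y"
    using nz by (auto simp: not_less order.order_iff_strict)
  have "is_interval (g ` S)"
    using connected_continuous_image[OF assms(2,1)] by (simp add: is_interval_connected_1)
  then have "0 \<in> g ` S"
    using xy unfolding is_interval_1 by (meson imageI less_imp_le)
  with nz show False by auto
qed

lemma deriv_tendsto_0_at_top:
  fixes f f' f'' :: "real \<Rightarrow> real"
  assumes f': "\<And>x. (f has_real_derivative f' x) (at x)"
    and f'': "\<And>x. (f' has_real_derivative f'' x) (at x)"
    and lim: "(f \<longlongrightarrow> 0) at_top" "(f'' \<longlongrightarrow> 0) at_top"
  shows "(f' \<longlongrightarrow> 0) at_top"
proof (rule tendstoI)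
  fix \<epsilon> :: real assume "0 < \<epsilon>"
  have "\<forall>\<^sub>F x in at_top. dist (f x) 0 < \<epsilon> / 3 \<and> dist (f'' x) 0 < \<epsilon> / 3"
    using \<open>0 < \<epsilon>\<close> by (intro eventually_conj tendstoD lim) simp_all
  then obtain N where N: "\<And>x. N \<le> x \<Longrightarrow> \<bar>f x\<bar> < \<epsilon> / 3 \<and> \<bar>f'' x\<bar> < \<epsilon> / 3"
    by (auto simp: eventually_at_top_linorder)
  have "\<bar>f' x\<bar> < \<epsilon>" if "N \<le> x" for x
  proof -
    \<comment> \<open>Two mean value steps: f' x = (f (x + 1) - f x) - (\<xi> - x) f'' \<zeta> with 0 < \<xi> - x < 1.\<close>
    obtain \<xi> where \<xi>: "x < \<xi>" "\<xi> < x + 1" "f (x + 1) - f x = f' \<xi>"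
      using MVT2[of x "x + 1" f f'] f' by auto
    obtain \<zeta> where \<zeta>: "x < \<zeta>" "\<zeta> < \<xi>" "f' \<xi> - f' x = (\<xi> - x) * f'' \<zeta>"
      using MVT2[of x \<xi> f' f''] f'' \<xi>(1) by auto
    have "\<bar>(\<xi> - x) * f'' \<zeta>\<bar> \<le> \<bar>f'' \<zeta>\<bar>"
      using \<xi> \<zeta> by (simp add: abs_mult mult_left_le_one_le)
    moreover have "\<bar>f (x + 1)\<bar> < \<epsilon> / 3" "\<bar>f x\<bar> < \<epsilon> / 3" "\<bar>f'' \<zeta>\<bar> < \<epsilon> / 3"
      using N[of "x + 1"] N[of x] N[of \<zeta>] that \<zeta>(1) by auto
    ultimately show ?thesis
      using \<xi>(3) \<zeta>(3) by linarith
  qed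
  then show "\<forall>\<^sub>F x in at_top. dist (f' x) 0 < \<epsilon>"
    by (auto simp: eventually_at_top_linorder)
qed

lemma deriv_tendsto_0_at_bot:
  fixes f f' f'' :: "real \<Rightarrow> real"
  assumes f': "\<And>x. (f has_real_derivative f' x) (at x)"
    and f'': "\<And>x. (f' has_real_derivative f'' x) (at x)"
    and lim: "(f \<longlongrightarrow> 0) at_bot" "(f'' \<longlongrightarrow> 0) at_bot"
  shows "(f' \<longlongrightarrow> 0) at_bot"
proof -
  have "((\<lambda>x. - f' (- x)) \<longlongrightarrow> 0) at_top"
  proof (rule deriv_tendsto_0_at_top)
    show "((\<lambda>x. f (- x)) has_real_derivative - f' (- x)) (at x)" for x
      using DERIV_mirror f' by blast
    show "((\<lambda>x. - f' (- x)) has_real_derivative f'' (- x)) (at x)" for x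
    proof -
      have "((\<lambda>x. f' (- x)) has_real_derivative - f'' (- x)) (at x)"
        using DERIV_mirror[where f=f' and x=x and y="f'' (- x)"] f'' by simp
      then show ?thesis using DERIV_minus by fastforce
    qed
  qed (use lim in \<open>simp_all add: filterlim_at_bot_mirror\<close>)
  then show ?thesis
    using tendsto_minus by (fastforce simp: filterlim_at_bot_mirror)
qed

lemma MVT_between:
  fixes f f' :: "real \<Rightarrow> real"
  assumes "\<And>y. min x c \<le> y \<Longrightarrow> y \<le> max x c \<Longrightarrow> (f has_real_derivative f' y) (at y)"
  obtains \<xi> where "min x c \<le> \<xi>" "\<xi> \<le> max x c" "f x - f c = (x - c) * f' \<xi>"
proof (cases x c rule: linorder_cases)
  case less
  then obtain z where "x < z" "z < c" "f c - f x = (c - x) * f' z"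
    using MVT2[of x c f f'] assms by auto
  then show ?thesis using less that[of z] by (auto simp: algebra_simps)
next
  case equal
  then show ?thesis using that[of c] by auto
next
  case greater
  then obtain z where "c < z" "z < x" "f x - f c = (x - c) * f' z"
    using MVT2[of c x f f'] assms by auto
  then show ?thesis using greater that[of z] by auto
qed

lemma Rolle_pos_deriv:
  fixes f f' :: "real \<Rightarrow> real"
  assumes "0 < a" "a < b" "f a = f b" "\<And>x. 0 < x \<Longrightarrow> (f has_real_derivative f' x) (at x)"
  obtains t where "a < t" "t < b" "f' t = 0"
proof -
  obtain t where "a < t" "t < b" "f b - f a = (b - a) * f' t"
    using MVT2[of a b f f'] assms by force
  then show thesis using that assms(2,3) by simp
qed

lemma deriv_nonneg_at_zero_from_right:
  fixes f :: "real \<Rightarrow> real"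
  assumes "(f has_real_derivative l) (at a)" "f a = 0" "\<forall>\<^sub>F x in at_right a. 0 \<le> f x"
  shows "0 \<le> l"
proof (rule tendsto_lowerbound)
  show "((\<lambda>x. (f x - f a) / (x - a)) \<longlongrightarrow> l) (at_right a)"
    by (rule tendsto_mono[OF at_le[OF subset_UNIV]])
      (use assms(1) in \<open>simp add: has_field_derivative_iff\<close>)
  show "\<forall>\<^sub>F x in at_right a. 0 \<le> (f x - f a) / (x - a)"
    using assms(3) eventually_at_right_less[of a]
    by eventually_elim (simp add: assms(2))
qed simp

lemma deriv_nonpos_at_zero_from_left:
  fixes f :: "real \<Rightarrow> real"
  assumes "(f has_real_derivative l) (at b)" "f b = 0" "\<forall>\<^sub>F x in at_left b. 0 \<le> f x"
  shows "l \<le> 0"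
proof (rule tendsto_upperbound)
  show "((\<lambda>x. (f x - f b) / (x - b)) \<longlongrightarrow> l) (at_left b)"
    by (rule tendsto_mono[OF at_le[OF subset_UNIV]])
      (use assms(1) in \<open>simp add: has_field_derivative_iff\<close>)
  show "\<forall>\<^sub>F x in at_left b. (f x - f b) / (x - b) \<le> 0"
    using assms(3) eventually_at_left_real[of "b - 1" b, simplified]
    by eventually_elim (simp add: assms(2) divide_nonneg_neg)
qed simp

lemma nonvanishing_to_the_right_if_deriv_sq_le:
  fixes f f' :: "real \<Rightarrow> real"
  assumes f': "\<And>x. (f has_real_derivative f' x) (at x)"
    and bound: "\<And>x. (f' x)\<^sup>2 \<le> K * (f x)\<^sup>2" and "f x0 \<noteq> 0" "x0 \<le> x"
  shows "f x \<noteq> 0"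
proof -
  \<comment> \<open>Gronwall: |(f^2)'| = |2 f f'| \<le> f^2 + f'^2 \<le> C f^2, so f^2 e^(C x) is nondecreasing.\<close>
  define C where "C = 1 + \<bar>K\<bar>"
  have growth: "0 \<le> 2 * f x * f' x + C * (f x)\<^sup>2" for x
  proof -
    have "\<bar>2 * f x * f' x\<bar> \<le> (f x)\<^sup>2 + (f' x)\<^sup>2"
      using sum_squares_bound[of "f x" "f' x"] sum_squares_bound[of "- f x" "f' x"]
      by (simp add: abs_if power2_eq_square algebra_simps)
    also have "\<dots> \<le> C * (f x)\<^sup>2"
      using bound[of x] mult_right_mono[OF abs_ge_self[of K], of "(f x)\<^sup>2"]
      by (simp add: C_def algebra_simps)
    finally show ?thesis by linarith
  qed
  define h where "h x = (f x)\<^sup>2 * exp (C * x)" for x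
  have "h x0 \<le> h x"
  proof (rule DERIV_nonneg_imp_nondecreasing[OF \<open>x0 \<le> x\<close>])
    fix y
    have "(h has_real_derivative (2 * f y * f' y + C * (f y)\<^sup>2) * exp (C * y)) (at y)"
      unfolding h_def[abs_def]
      by (auto intro!: derivative_eq_intros f' simp: algebra_simps power2_eq_square)
    then show "\<exists>l. (h has_real_derivative l) (at y) \<and> 0 \<le> l"
      using growth[of y] by (intro exI[of _ "(2 * f y * f' y + C * (f y)\<^sup>2) * exp (C * y)"]) simp
  qed
  moreover have "0 < h x0" using \<open>f x0 \<noteq> 0\<close> by (simp add: h_def)
  ultimately show ?thesis by (auto simp: h_def)
qed

lemma nonvanishing_if_deriv_sq_le:
  fixes f f' :: "real \<Rightarrow> real"
  assumes f': "\<And>x. (f has_real_derivative f' x) (at x)"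
    and bound: "\<And>x. (f' x)\<^sup>2 \<le> K * (f x)\<^sup>2" and "f x0 \<noteq> 0"
  shows "f x \<noteq> 0"
proof (cases "x0 \<le> x")
  case True
  then show ?thesis using nonvanishing_to_the_right_if_deriv_sq_le[OF f' bound \<open>f x0 \<noteq> 0\<close>] by blast
next
  case False
  have "((\<lambda>x. f (- x)) has_real_derivative - f' (- x)) (at x)" for x
    using DERIV_mirror f' by blast
  then show ?thesis
    using nonvanishing_to_the_right_if_deriv_sq_le[of "\<lambda>x. f (- x)" "\<lambda>x. - f' (- x)" K "- x0" "- x"]
      bound \<open>f x0 \<noteq> 0\<close> False
    by simp
qed

definition decaying_solution :: "(real \<Rightarrow> real) \<Rightarrow> (real \<Rightarrow> real) \<Rightarrow> bool" where
  "decaying_solution q u \<longleftrightarrow>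
     (\<exists>u' u''. (\<forall>x. (u has_real_derivative u' x) (at x)) \<and> (\<forall>x. (u' has_real_derivative u'' x) (at x)) \<and>
       (\<forall>x. u'' x = q x * u x) \<and>
       (u \<longlongrightarrow> 0) at_top \<and> (u \<longlongrightarrow> 0) at_bot \<and> (u' \<longlongrightarrow> 0) at_top \<and> (u' \<longlongrightarrow> 0) at_bot)"

lemma decaying_solution_scale:
  assumes "decaying_solution q u"
  shows "decaying_solution q (\<lambda>x. c * u x)"
proof -
  obtain u' u'' where u: "\<forall>x. (u has_real_derivative u' x) (at x)" "\<forall>x. (u' has_real_derivative u'' x) (at x)"
    "\<forall>x. u'' x = q x * u x" "(u \<longlongrightarrow> 0) at_top" "(u \<longlongrightarrow> 0) at_bot" "(u' \<longlongrightarrow> 0) at_top" "(u' \<longlongrightarrow> 0) at_bot"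
    using assms unfolding decaying_solution_def by blast
  show ?thesis
    unfolding decaying_solution_def
    by (intro exI[of _ "\<lambda>x. c * u' x"] exI[of _ "\<lambda>x. c * u'' x"])
      (use u in \<open>auto intro!: DERIV_cmult tendsto_mult_right_zero\<close>)
qed

lemma decaying_solution_continuous:
  "decaying_solution q u \<Longrightarrow> continuous_on UNIV u"
  unfolding decaying_solution_def
  by (metis DERIV_isCont continuous_at_imp_continuous_on)

lemma positivity_component:
  fixes u :: "real \<Rightarrow> real"
  assumes cont: "continuous_on UNIV u" and "0 < u x0"
  obtains I where "x0 \<in> I" "is_interval I" "open I"
    "\<And>x. x \<in> I \<Longrightarrow> 0 < u x" "\<And>x. x \<in> frontier I \<Longrightarrow> u x = 0"
proof -
  define S where "S = {x. 0 < u x}"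
  define I where "I = connected_component_set S x0"
  have "open S"
    unfolding S_def using cont by (intro open_Collect_less) auto
  have "closure S \<subseteq> {x. 0 \<le> u x}"
    unfolding S_def using cont by (intro closure_minimal closed_Collect_le) auto
  moreover have "x \<in> closure S" "x \<notin> S" if "x \<in> frontier I" for x
    using frontier_of_connected_component_subset[of S x0] that
    unfolding I_def frontier_def interior_open[OF \<open>open S\<close>] by auto
  ultimately have "u x = 0" if "x \<in> frontier I" for x
    using that by (force simp: S_def)
  moreover have "x0 \<in> I" "is_interval I" "open I" "\<And>x. x \<in> I \<Longrightarrow> 0 < u x"
    using \<open>0 < u x0\<close> open_connected_component[OF \<open>open S\<close>] connected_component_subset[of S x0]
    by (auto simp: I_def S_def is_interval_connected_1)
  ultimately show thesis using that by blast
qed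

lemma open_interval_Inf:
  fixes I :: "real set"
  assumes I: "is_interval I" "open I" "x \<in> I" "bdd_below I"
  shows "Inf I \<in> frontier I" "Inf I < x" "\<forall>\<^sub>F y in at_right (Inf I). y \<in> I"
proof -
  obtain m where "\<And>y. y \<in> I \<Longrightarrow> m \<le> y" using I(4) unfolding bdd_below_def by blast
  then have "Inf I \<notin> I" using Inf_notin_open[OF I(2), of "m - 1"] by force
  moreover have "Inf I \<in> closure I" using closure_contains_Inf I(3,4) by blast
  ultimately show "Inf I \<in> frontier I" "Inf I < x"
    using cInf_lower[OF I(3,4)] I(2,3) by (auto simp: frontier_def interior_open le_less)
  have inner: "y \<in> I" if y: "Inf I < y" "y < x" for y
  proof -
    obtain i where "i \<in> I" "i < y" using y(1) cInf_less_iff[OF _ I(4)] I(3) by blast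
    then show ?thesis using mem_is_interval_1_I[OF I(1) \<open>i \<in> I\<close> I(3)] y by simp
  qed
  show "\<forall>\<^sub>F y in at_right (Inf I). y \<in> I"
    using eventually_at_right_real[OF \<open>Inf I < x\<close>] by eventually_elim (auto intro: inner)
qed

lemma open_interval_Sup:
  fixes I :: "real set"
  assumes I: "is_interval I" "open I" "x \<in> I" "bdd_above I"
  shows "Sup I \<in> frontier I" "x < Sup I" "\<forall>\<^sub>F y in at_left (Sup I). y \<in> I"
proof -
  obtain m where "\<And>y. y \<in> I \<Longrightarrow> y \<le> m" using I(4) unfolding bdd_above_def by blast
  then have "Sup I \<notin> I" using Sup_notin_open[OF I(2), of "m + 1"] by force
  moreover have "Sup I \<in> closure I" using closure_contains_Sup I(3,4) by blast
  ultimately show "Sup I \<in> frontier I" "x < Sup I"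
    using cSup_upper[OF I(3,4)] I(2,3) by (auto simp: frontier_def interior_open le_less)
  have inner: "y \<in> I" if y: "x < y" "y < Sup I" for y
  proof -
    obtain i where "i \<in> I" "y < i" using y(2) less_cSup_iff[OF _ I(4)] I(3) by blast
    then show ?thesis using mem_is_interval_1_I[OF I(1) I(3) \<open>i \<in> I\<close>] y by simp
  qed
  show "\<forall>\<^sub>F y in at_left (Sup I). y \<in> I"
    using eventually_at_left_real[OF \<open>x < Sup I\<close>] by eventually_elim (auto intro: inner)
qed

lemma mono_on_closure_nonneg:
  fixes W :: "real \<Rightarrow> real"
  assumes I: "is_interval I" "x \<in> I"
    and mono: "\<And>y z. y \<in> closure I \<Longrightarrow> z \<in> closure I \<Longrightarrow> y \<le> z \<Longrightarrow> W y \<le> W z"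
    and lim: "(W \<longlongrightarrow> 0) at_bot" and Inf: "bdd_below I \<Longrightarrow> 0 \<le> W (Inf I)"
  shows "0 \<le> W x"
proof (cases "bdd_below I")
  case True
  have "Inf I \<in> closure I" using closure_contains_Inf True I(2) by blast
  then have "W (Inf I) \<le> W x"
    using mono closure_subset cInf_lower[OF I(2) True] I(2) by blast
  then show ?thesis using Inf[OF True] by simp
next
  case False
  have "W y \<le> W x" if y: "y \<le> x" for y
  proof -
    obtain i where "i \<in> I" "i < y" using False unfolding bdd_below_def by (meson not_le)
    then have "y \<in> I" using mem_is_interval_1_I[OF I(1) \<open>i \<in> I\<close> I(2)] y by simp
    then show ?thesis using mono closure_subset I(2) y by blast
  qed
  then have "\<forall>\<^sub>F y in at_bot. W y \<le> W x"
    by (auto simp: eventually_at_bot_linorder)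
  from tendsto_upperbound[OF lim this] show ?thesis by simp
qed

lemma mono_on_closure_nonpos:
  fixes W :: "real \<Rightarrow> real"
  assumes I: "is_interval I" "x \<in> I"
    and mono: "\<And>y z. y \<in> closure I \<Longrightarrow> z \<in> closure I \<Longrightarrow> y \<le> z \<Longrightarrow> W y \<le> W z"
    and lim: "(W \<longlongrightarrow> 0) at_top" and Sup: "bdd_above I \<Longrightarrow> W (Sup I) \<le> 0"
  shows "W x \<le> 0"
proof (cases "bdd_above I")
  case True
  have "Sup I \<in> closure I" using closure_contains_Sup True I(2) by blast
  then have "W x \<le> W (Sup I)"
    using mono closure_subset cSup_upper[OF I(2) True] I(2) by blast
  then show ?thesis using Sup[OF True] by simp
next
  case False
  have "W x \<le> W y" if y: "x \<le> y" for y
  proof -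
    obtain i where "i \<in> I" "y < i" using False unfolding bdd_above_def by (meson not_le)
    then have "y \<in> I" using mem_is_interval_1_I[OF I(1) I(2) \<open>i \<in> I\<close>] y by simp
    then show ?thesis using mono closure_subset I(2) y by blast
  qed
  then have "\<forall>\<^sub>F y in at_top. W x \<le> W y"
    by (auto simp: eventually_at_top_linorder)
  from tendsto_lowerbound[OF lim this] show ?thesis by simp
qed

lemma nondecreasing_on_closure_if_deriv_nonneg:
  fixes W W' :: "real \<Rightarrow> real"
  assumes "is_interval I" "\<And>x. (W has_real_derivative W' x) (at x)"
    "\<And>x. x \<in> closure I \<Longrightarrow> 0 \<le> W' x" "x \<in> closure I" "y \<in> closure I" "x \<le> y"
  shows "W x \<le> W y"
proof (rule DERIV_nonneg_imp_nondecreasing[OF \<open>x \<le> y\<close>])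
  fix z assume "x \<le> z" "z \<le> y"
  moreover have "is_interval (closure I)"
    using assms(1) by (simp add: is_interval_convex_1)
  ultimately have "z \<in> closure I"
    using mem_is_interval_1_I assms(4,5) by blast
  then show "\<exists>l. (W has_real_derivative l) (at z) \<and> 0 \<le> l" using assms(2,3) by blast
qed

lemma decaying_solution_wronskian:
  fixes u v p r :: "real \<Rightarrow> real"
  assumes u: "decaying_solution p u" and v: "decaying_solution r v"
  obtains u' v' where "\<And>x. (u has_real_derivative u' x) (at x)"
    "\<And>x. ((\<lambda>x. u' x * v x - u x * v' x) has_real_derivative (p x - r x) * u x * v x) (at x)"
    "((\<lambda>x. u' x * v x - u x * v' x) \<longlongrightarrow> 0) at_top"
    "((\<lambda>x. u' x * v x - u x * v' x) \<longlongrightarrow> 0) at_bot"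
proof -
  obtain u' u'' where u': "\<And>x. (u has_real_derivative u' x) (at x)"
    and u'': "\<And>x. (u' has_real_derivative u'' x) (at x)" and u_ode: "\<And>x. u'' x = p x * u x"
    and u_lim: "(u \<longlongrightarrow> 0) at_top" "(u \<longlongrightarrow> 0) at_bot" "(u' \<longlongrightarrow> 0) at_top" "(u' \<longlongrightarrow> 0) at_bot"
    using u unfolding decaying_solution_def by blast
  obtain v' v'' where v': "\<And>x. (v has_real_derivative v' x) (at x)"
    and v'': "\<And>x. (v' has_real_derivative v'' x) (at x)" and v_ode: "\<And>x. v'' x = r x * v x"
    and v_lim: "(v \<longlongrightarrow> 0) at_top" "(v \<longlongrightarrow> 0) at_bot" "(v' \<longlongrightarrow> 0) at_top" "(v' \<longlongrightarrow> 0) at_bot"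
    using v unfolding decaying_solution_def by blast
  have "((\<lambda>x. u' x * v x - u x * v' x) has_real_derivative (p x - r x) * u x * v x) (at x)" for x
  proof -
    have "((\<lambda>x. u' x * v x - u x * v' x) has_real_derivative
        (u'' x * v x + v' x * u' x) - (u' x * v' x + v'' x * u x)) (at x)"
      by (intro DERIV_diff DERIV_mult u' u'' v' v'')
    then show ?thesis by (simp add: u_ode v_ode algebra_simps)
  qed
  moreover have "((\<lambda>x. u' x * v x - u x * v' x) \<longlongrightarrow> 0) at_top"
    "((\<lambda>x. u' x * v x - u x * v' x) \<longlongrightarrow> 0) at_bot"
    using u_lim v_lim by (auto intro!: tendsto_eq_intros)
  ultimately show thesis using that[OF u'] by blast
qed

text \<open>The Wronskian W = u' v - u v' is nondecreasing on the closure of I. At a finite end of I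
  we have u = 0, and the sign of u' there makes W \<ge> 0 at the left end and W \<le> 0 at the right
  end; at an infinite end W tends to 0. So W vanishes on I, contradicting W' t > 0.\<close>

lemma sturm_comparison:
  fixes u v p r :: "real \<Rightarrow> real"
  assumes u: "decaying_solution p u" and v: "decaying_solution r v" and pr: "\<And>x. r x < p x"
    and I: "is_interval I" "open I" "t \<in> I"
    and u_pos: "\<And>x. x \<in> I \<Longrightarrow> 0 < u x" and u_frontier: "\<And>x. x \<in> frontier I \<Longrightarrow> u x = 0"
    and v_nonneg: "\<And>x. x \<in> closure I \<Longrightarrow> 0 \<le> v x" and "0 < v t"
  shows False
proof -
  obtain u' v' where u': "\<And>x. (u has_real_derivative u' x) (at x)"
    and W': "\<And>x. ((\<lambda>x. u' x * v x - u x * v' x) has_real_derivative (p x - r x) * u x * v x) (at x)"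
    and W_lim: "((\<lambda>x. u' x * v x - u x * v' x) \<longlongrightarrow> 0) at_top"
      "((\<lambda>x. u' x * v x - u x * v' x) \<longlongrightarrow> 0) at_bot"
    using decaying_solution_wronskian[OF u v] by blast
  define W where "W x = u' x * v x - u x * v' x" for x
  have W_mono: "W x \<le> W y" if "x \<in> closure I" "y \<in> closure I" "x \<le> y" for x y
  proof (rule nondecreasing_on_closure_if_deriv_nonneg[OF I(1) _ _ that])
    show "(W has_real_derivative (p z - r z) * u z * v z) (at z)" for z
      using W' unfolding W_def[abs_def] by blast
    show "0 \<le> (p z - r z) * u z * v z" if "z \<in> closure I" for z
      using pr[of z] u_pos[of z] u_frontier[of z] v_nonneg[OF that] that closure_Un_frontier[of I]
      by force
  qed
  have "W x = 0" if "x \<in> I" for x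
  proof (rule antisym)
    show "0 \<le> W x"
    proof (rule mono_on_closure_nonneg[OF I(1) that W_mono W_lim(2)[folded W_def]])
      assume "bdd_below I"
      note a = open_interval_Inf[OF I(1,2) that this]
      have "\<forall>\<^sub>F y in at_right (Inf I). 0 \<le> u y"
        using a(3) by eventually_elim (simp add: less_imp_le u_pos)
      then have "0 \<le> u' (Inf I)"
        by (rule deriv_nonneg_at_zero_from_right[OF u' u_frontier[OF a(1)]])
      then show "0 \<le> W (Inf I)"
        using v_nonneg[of "Inf I"] u_frontier[OF a(1)] a(1) by (simp add: W_def frontier_def)
    qed
    show "W x \<le> 0"
    proof (rule mono_on_closure_nonpos[OF I(1) that W_mono W_lim(1)[folded W_def]])
      assume "bdd_above I"
      note b = open_interval_Sup[OF I(1,2) that this]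
      have "\<forall>\<^sub>F y in at_left (Sup I). 0 \<le> u y"
        using b(3) by eventually_elim (simp add: less_imp_le u_pos)
      then have "u' (Sup I) \<le> 0"
        by (rule deriv_nonpos_at_zero_from_left[OF u' u_frontier[OF b(1)]])
      then show "W (Sup I) \<le> 0"
        using v_nonneg[of "Sup I"] u_frontier[OF b(1)] b(1)
        by (simp add: W_def frontier_def mult_nonpos_nonneg)
    qed
  qed
  moreover obtain d where "0 < d" "ball t d \<subseteq> I" using \<open>open I\<close> I(3) openE by blast
  ultimately have "\<forall>y. \<bar>t - y\<bar> < d \<longrightarrow> W t = W y"
    using I(3) by (auto simp: dist_real_def subset_iff)
  then have "(p t - r t) * u t * v t = 0"
    by (rule DERIV_local_const[OF W'[folded W_def] \<open>0 < d\<close>])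
  then show False using pr[of t] u_pos[OF I(3)] \<open>0 < v t\<close> by simp
qed

lemma sturm_positive_at_only_zero:
  fixes u v p r :: "real \<Rightarrow> real"
  assumes u: "decaying_solution p u" and v: "decaying_solution r v" and pr: "\<And>x. r x < p x"
    and v_nonzero: "\<And>x. x \<noteq> z \<Longrightarrow> v x \<noteq> 0" and "0 < u x0"
  shows "0 < u z"
proof (rule ccontr)
  assume "\<not> 0 < u z"
  obtain I where I: "x0 \<in> I" "is_interval I" "open I"
    and u_pos: "\<And>x. x \<in> I \<Longrightarrow> 0 < u x" and u_frontier: "\<And>x. x \<in> frontier I \<Longrightarrow> u x = 0"
    using positivity_component[OF decaying_solution_continuous[OF u] \<open>0 < u x0\<close>] by blast
  have "z \<notin> I" using u_pos \<open>\<not> 0 < u z\<close> by blast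
  have no_sign: False if c: "\<forall>x\<in>I. 0 < c * v x" for c
  proof (rule sturm_comparison[OF u decaying_solution_scale[OF v] pr I(2,3,1) u_pos u_frontier])
    have "continuous_on UNIV (\<lambda>x. c * v x)"
      using decaying_solution_continuous[OF v] by (intro continuous_intros)
    then have "closure I \<subseteq> {x. 0 \<le> c * v x}"
      using c by (intro closure_minimal closed_Collect_le) (auto intro: less_imp_le)
    then show "\<And>x. x \<in> closure I \<Longrightarrow> 0 \<le> c * v x" by blast
    show "0 < c * v x0" using c I(1) by blast
  qed
  have "continuous_on I v"
    using decaying_solution_continuous[OF v] by (rule continuous_on_subset) simp
  then have "(\<forall>x\<in>I. 0 < v x) \<or> (\<forall>x\<in>I. v x < 0)"
    using constant_sign_if_nonzero[of I v] I(2) v_nonzero \<open>z \<notin> I\<close>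
    by (metis is_interval_connected_1)
  then show False
    using no_sign[of 1] no_sign[of "-1"] by auto
qed

lemma sturm_sign_definite:
  fixes u v p r :: "real \<Rightarrow> real"
  assumes u: "decaying_solution p u" and v: "decaying_solution r v" and pr: "\<And>x. r x < p x"
    and v_nonzero: "\<And>x. x \<noteq> z \<Longrightarrow> v x \<noteq> 0" and "u \<noteq> (\<lambda>x. 0)"
  shows "\<exists>c. (\<forall>x. 0 \<le> c * u x) \<and> 0 < c * u z"
proof -
  obtain x0 where "u x0 \<noteq> 0" using \<open>u \<noteq> (\<lambda>x. 0)\<close> by blast
  define c where "c = sgn (u x0)"
  have pos_at_z: "0 < d * u z" if "0 < d * u x" for d x
    using sturm_positive_at_only_zero[OF decaying_solution_scale[OF u] v pr v_nonzero that] .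
  have "0 < c * u x0"
    using \<open>u x0 \<noteq> 0\<close> by (simp add: c_def sgn_mult_self_eq abs_sgn[symmetric] mult.commute)
  then have "0 < c * u z" by (rule pos_at_z)
  moreover have "0 \<le> c * u x" for x
    using pos_at_z[of "- c" x] \<open>0 < c * u z\<close> by (cases "0 \<le> c * u x") auto
  ultimately show ?thesis by blast
qed

lemma sturm_no_nonneg_comparison:
  fixes u v p r :: "real \<Rightarrow> real"
  assumes u: "decaying_solution p u" and v: "decaying_solution r v" and pr: "\<And>x. r x < p x"
    and "0 < u z" and v_nonneg: "\<And>x. 0 \<le> v x" and "0 < v z"
  shows False
proof -
  obtain I where "z \<in> I" "is_interval I" "open I"
    "\<And>x. x \<in> I \<Longrightarrow> 0 < u x" "\<And>x. x \<in> frontier I \<Longrightarrow> u x = 0"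
    using positivity_component[OF decaying_solution_continuous[OF u] \<open>0 < u z\<close>] by blast
  then show False
    using sturm_comparison[OF u v pr, of I z] v_nonneg \<open>0 < v z\<close> by blast
qed

lemma sq_integrable_if_sq_le:
  fixes f g :: "real \<Rightarrow> real"
  assumes "continuous_on UNIV g" "sq_integrable f" "\<And>x. (g x)\<^sup>2 \<le> C * (f x)\<^sup>2"
  shows "sq_integrable g"
  unfolding sq_integrable_def
proof
  show g_meas: "g \<in> borel_measurable lborel"
    using assms(1) by (simp add: borel_measurable_continuous_onI)
  show "integrable lborel (\<lambda>x. (g x)\<^sup>2)"
  proof (rule Bochner_Integration.integrable_bound)
    show "integrable lborel (\<lambda>x. C * (f x)\<^sup>2)" using assms(2) by (simp add: sq_integrable_def)
    show "(\<lambda>x. (g x)\<^sup>2) \<in> borel_measurable lborel" using g_meas by measurable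
    show "AE x in lborel. norm ((g x)\<^sup>2) \<le> norm (C * (f x)\<^sup>2)"
      using assms(3) by (auto intro: order.trans[OF _ abs_ge_self])
  qed
qed

lemma integrable_lborel_if_interval_integrals_bounded:
  fixes f :: "real \<Rightarrow> real"
  assumes cont: "continuous_on UNIV f" and nonneg: "\<And>x. 0 \<le> f x"
    and bound: "\<And>a b. a \<le> b \<Longrightarrow> integral {a..b} f \<le> B"
  shows "integrable lborel f"
proof -
  define g where "g k x = (if x \<in> {- real k..real k} then f x else 0)" for k :: nat and x
  have int_Icc: "f integrable_on {a..b}" for a b
    by (rule integrable_continuous_interval[OF continuous_on_subset[OF cont]]) simp
  have "f integrable_on UNIV \<and> ((\<lambda>k. integral UNIV (g k)) \<longlonglongrightarrow> integral UNIV f)"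
  proof (rule monotone_convergence_increasing)
    show "g k integrable_on UNIV" for k
      unfolding g_def integrable_restrict_UNIV by (rule int_Icc)
    show "g k x \<le> g (Suc k) x" for k x
      using nonneg by (auto simp: g_def)
    show "(\<lambda>k. g k x) \<longlonglongrightarrow> f x" for x
    proof (rule tendsto_eventually)
      obtain k0 :: nat where "\<bar>x\<bar> \<le> real k0" using real_arch_simple by blast
      then show "\<forall>\<^sub>F k in sequentially. g k x = f x"
        unfolding eventually_sequentially by (intro exI[of _ k0]) (auto simp: g_def)
    qed
    have "\<bar>integral UNIV (g k)\<bar> \<le> B" for k
    proof -
      have "integral UNIV (g k) = integral {- real k..real k} f"
        unfolding g_def by (rule integral_restrict_UNIV)
      moreover have "0 \<le> integral {- real k..real k} f"
        using nonneg by (intro integral_nonneg int_Icc) auto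
      ultimately show ?thesis using bound[of "- real k" "real k"] by simp
    qed
    then show "bounded (range (\<lambda>k. integral UNIV (g k)))" unfolding bounded_real by blast
  qed
  then have "f absolutely_integrable_on UNIV"
    using nonneg by (intro nonnegative_absolutely_integrable_1) auto
  then have "integrable lebesgue f"
    by (simp add: absolutely_integrable_on_def set_integrable_def)
  moreover have "f \<in> borel_measurable lborel"
    using cont by (simp add: borel_measurable_continuous_onI)
  ultimately show ?thesis using integrable_completion by blast
qed

text \<open>By parts, the integral of M'^2 over [a, b] is [M M'] minus the integral of M'' M.\<close>
lemma interval_integral_deriv_sq_le:
  fixes M M' M'' :: "real \<Rightarrow> real"
  assumes M': "\<And>z. (M has_real_derivative M' z) (at z)"
    and M'': "\<And>z. (M' has_real_derivative M'' z) (at z)" and cont_M'': "continuous_on UNIV M''"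
    and M''_bound: "\<And>x. - (M'' x * M x) \<le> B * (M x)\<^sup>2" and "0 \<le> B"
    and int_M: "integrable lborel (\<lambda>z. (M z)\<^sup>2)" and C: "\<And>x. \<bar>M x * M' x\<bar> \<le> C" and "a \<le> b"
  shows "integral {a..b} (\<lambda>x. (M' x)\<^sup>2) \<le> 2 * C + B * integral UNIV (\<lambda>z. (M z)\<^sup>2)"
proof -
  have cont_M: "continuous_on UNIV M"
    using M' by (metis DERIV_isCont continuous_at_imp_continuous_on)
  have int_Icc: "g integrable_on {a..b}" if "continuous_on UNIV g" for g :: "real \<Rightarrow> real"
    by (rule integrable_continuous_interval[OF continuous_on_subset[OF that]]) simp
  have int_M''M: "(\<lambda>x. M'' x * M x) integrable_on {a..b}"
    using cont_M'' cont_M by (intro int_Icc continuous_on_mult)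
  have "((\<lambda>x. M' x * M' x + M'' x * M x) has_integral (M b * M' b - M a * M' a)) {a..b}"
    using \<open>a \<le> b\<close> DERIV_mult[OF M' M'']
    by (intro fundamental_theorem_of_calculus)
      (auto simp: has_real_derivative_iff_has_vector_derivative has_vector_derivative_at_within)
  from has_integral_diff[OF this integrable_integral[OF int_M''M]]
  have parts: "integral {a..b} (\<lambda>x. (M' x)\<^sup>2)
      = (M b * M' b - M a * M' a) - integral {a..b} (\<lambda>x. M'' x * M x)"
    by (simp add: power2_eq_square integral_unique)
  have "integral {a..b} (\<lambda>x. - (M'' x * M x)) \<le> integral {a..b} (\<lambda>x. B * (M x)\<^sup>2)"
    using M''_bound cont_M cont_M'' by (intro integral_le int_Icc) (auto intro!: continuous_intros)
  also have "\<dots> = B * integral {a..b} (\<lambda>x. (M x)\<^sup>2)" by simp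
  also have "\<dots> \<le> B * integral UNIV (\<lambda>z. (M z)\<^sup>2)"
    using \<open>0 \<le> B\<close> cont_M
    by (intro mult_left_mono integral_subset_le int_Icc integrable_on_lborel[OF int_M])
      (auto intro: continuous_intros)
  finally have "- integral {a..b} (\<lambda>x. M'' x * M x) \<le> B * integral UNIV (\<lambda>z. (M z)\<^sup>2)"
    by simp
  then show ?thesis using parts C[of a] C[of b] by linarith
qed

lemma sq_integrable_derivs_if_ode:
  fixes M M' M'' q :: "real \<Rightarrow> real"
  assumes M': "\<And>z. (M has_real_derivative M' z) (at z)"
    and M'': "\<And>z. (M' has_real_derivative M'' z) (at z)"
    and ode: "\<And>z. M'' z = q z * M z" and cont_q: "continuous_on UNIV q" and q_bound: "\<And>z. \<bar>q z\<bar> \<le> B"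
    and lim: "(M \<longlongrightarrow> 0) at_top" "(M \<longlongrightarrow> 0) at_bot" "(M' \<longlongrightarrow> 0) at_top" "(M' \<longlongrightarrow> 0) at_bot"
    and "sq_integrable M"
  shows "sq_integrable M'" "sq_integrable M''"
proof -
  have cont_M: "continuous_on UNIV M" and cont_M': "continuous_on UNIV M'"
    using M' M'' by (metis DERIV_isCont continuous_at_imp_continuous_on)+
  have "M'' = (\<lambda>z. q z * M z)" using ode by auto
  then have cont_M'': "continuous_on UNIV M''"
    using cont_q cont_M by (simp add: continuous_on_mult)
  have "0 \<le> B" using q_bound[of 0] by linarith
  have M''_bound: "- (M'' x * M x) \<le> B * (M x)\<^sup>2" for x
  proof -
    have "\<bar>M'' x * M x\<bar> = \<bar>q x\<bar> * (M x)\<^sup>2" by (simp add: ode abs_mult power2_eq_square)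
    also have "\<dots> \<le> B * (M x)\<^sup>2" using q_bound[of x] by (intro mult_right_mono) auto
    finally show ?thesis by linarith
  qed
  have "((\<lambda>x. M x * M' x) \<longlongrightarrow> 0) at_infinity"
    using tendsto_at_infinity_real[OF tendsto_mult[OF lim(1,3)] tendsto_mult[OF lim(2,4)]] by simp
  then have "bounded (range (\<lambda>x. M x * M' x))"
    using cont_M cont_M' by (intro bounded_range_if_tendsto_at_infinity continuous_on_mult)
  then obtain C where C: "\<And>x. \<bar>M x * M' x\<bar> \<le> C"
    unfolding bounded_real by blast
  have "integrable lborel (\<lambda>x. (M' x)\<^sup>2)"
  proof (rule integrable_lborel_if_interval_integrals_bounded)
    show "continuous_on UNIV (\<lambda>x. (M' x)\<^sup>2)" using cont_M' by (intro continuous_intros)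
    show "integral {a..b} (\<lambda>x. (M' x)\<^sup>2) \<le> 2 * C + B * integral UNIV (\<lambda>z. (M z)\<^sup>2)" if "a \<le> b" for a b
      using interval_integral_deriv_sq_le[OF M' M'' cont_M'' M''_bound \<open>0 \<le> B\<close> _ C that]
        \<open>sq_integrable M\<close> by (simp add: sq_integrable_def)
  qed simp
  then show "sq_integrable M'"
    unfolding sq_integrable_def using cont_M' by (simp add: borel_measurable_continuous_onI)
  have "(M'' x)\<^sup>2 \<le> B\<^sup>2 * (M x)\<^sup>2" for x
    using power_mono[OF q_bound[of x] abs_ge_zero, of 2]
    by (simp add: ode power_mult_distrib mult_right_mono)
  then show "sq_integrable M''"
    using sq_integrable_if_sq_le[OF cont_M'' \<open>sq_integrable M\<close>] by blast
qed

lemma smooth_real_has_derivative: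
  "smooth_real f \<Longrightarrow> ((deriv ^^ n) f has_real_derivative (deriv ^^ Suc n) f z) (at z)"
  unfolding smooth_real_def
  by (metis DERIV_deriv_iff_real_differentiable UNIV_I comp_apply differentiable_on_def
      funpow.simps(2) open_UNIV at_within_open)

locale soliton_wave =
  fixes \<beta> \<nu> \<kappa> e s :: real and w \<eta> :: "real \<Rightarrow> real"
  assumes \<beta>_pos: "0 < \<beta>" and \<nu>_gt: "-1 < \<nu>" and \<kappa>_pos: "0 < \<kappa>" and e_pos: "0 < e"
    and soliton: "soliton \<beta> \<nu> \<kappa> e s w \<eta>" and s_nonzero: "s \<noteq> 0"
begin

definition "w1 = deriv w"
definition "w2 = deriv w1"
definition "w3 = deriv w2"
definition "\<eta>1 = deriv \<eta>"
definition "\<gamma> = gam \<beta> \<nu>"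

text \<open>The (2,2) entry of L^s, and the potential of the generalized eigenvalue problem, which for
  \<mu> = 0 is the potential of the equation satisfied by w'.\<close>
definition "\<theta> z = (\<nu> + 2) * \<eta> z powr (-(\<nu> + 3))"
definition "Q \<mu> z = \<gamma> - \<mu> + s\<^sup>2 / (\<mu> - \<theta> z)"

lemma \<gamma>_pos: "0 < \<gamma>"
  using \<beta>_pos \<nu>_gt by (simp add: \<gamma>_def gam_def)

lemma smooth_w: "smooth_real w" and smooth_\<eta>: "smooth_real \<eta>"
  and \<eta>_pos: "\<And>z. 0 < \<eta> z"
  and nonconstant: "\<exists>z1 z2. (w z1, \<eta> z1) \<noteq> (w z2, \<eta> z2)"
  and w_\<eta>_relation: "\<And>z. s * w z + e powr (-(\<nu>+2)) - \<eta> z powr (-(\<nu>+2)) = 0"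
  and w_ode: "\<And>z. gam \<beta> \<nu> * w z - \<kappa> * (deriv (deriv w)) z + s * (\<eta> z - e) = 0"
  and w_lim: "(w \<longlongrightarrow> 0) at_top" "(w \<longlongrightarrow> 0) at_bot"
  and \<eta>_lim: "(\<eta> \<longlongrightarrow> e) at_top" "(\<eta> \<longlongrightarrow> e) at_bot"
  using soliton unfolding soliton_def by blast+

lemma \<theta>_pos: "0 < \<theta> z"
  using \<eta>_pos[of z] \<nu>_gt by (simp add: \<theta>_def)

lemma w_deriv: "(w has_real_derivative w1 z) (at z)"
  using smooth_real_has_derivative[OF smooth_w, of 0] by (simp add: w1_def)

lemma w1_deriv: "(w1 has_real_derivative w2 z) (at z)"
  using smooth_real_has_derivative[OF smooth_w, of 1] by (simp add: w1_def w2_def)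

lemma w2_deriv: "(w2 has_real_derivative w3 z) (at z)"
  using smooth_real_has_derivative[OF smooth_w, of 2] by (simp add: w1_def w2_def w3_def numeral_2_eq_2)

lemma \<eta>_deriv: "(\<eta> has_real_derivative \<eta>1 z) (at z)"
  using smooth_real_has_derivative[OF smooth_\<eta>, of 0] by (simp add: \<eta>1_def)

lemma continuous_\<eta>: "continuous_on UNIV \<eta>"
  using \<eta>_deriv by (metis DERIV_isCont continuous_at_imp_continuous_on)

lemma \<eta>1_eq: "\<eta>1 z = - s * w1 z / \<theta> z"
proof -
  have "((\<lambda>z. s * w z + e powr (-(\<nu>+2)) - \<eta> z powr (-(\<nu>+2))) has_real_derivative
      s * w1 z + 0 - (-(\<nu>+2)) * \<eta> z powr (-(\<nu>+2) - 1) * \<eta>1 z) (at z)"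
    using DERIV_fun_powr[OF \<eta>_deriv \<eta>_pos, of "-(\<nu>+2)"]
    by (intro DERIV_diff DERIV_add DERIV_cmult w_deriv DERIV_const) simp
  moreover have "(\<lambda>z. s * w z + e powr (-(\<nu>+2)) - \<eta> z powr (-(\<nu>+2))) = (\<lambda>z. 0)"
    using w_\<eta>_relation by auto
  then have "((\<lambda>z. s * w z + e powr (-(\<nu>+2)) - \<eta> z powr (-(\<nu>+2))) has_real_derivative 0) (at z)"
    by simp
  ultimately have "s * w1 z + 0 - (-(\<nu>+2)) * \<eta> z powr (-(\<nu>+2) - 1) * \<eta>1 z = 0"
    by (rule DERIV_unique)
  then have "s * w1 z + \<theta> z * \<eta>1 z = 0"
    by (simp add: \<theta>_def algebra_simps)
  then show ?thesis using \<theta>_pos[of z] by (simp add: field_simps)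
qed

lemma w2_eq: "\<kappa> * w2 z = \<gamma> * w z + s * (\<eta> z - e)"
  using w_ode[of z] by (simp add: w1_def w2_def \<gamma>_def)

lemma w3_eq: "w3 z = Q 0 z / \<kappa> * w1 z"
proof -
  have "((\<lambda>z. \<gamma> * w z + s * (\<eta> z - e)) has_real_derivative \<gamma> * w1 z + s * (\<eta>1 z - 0)) (at z)"
    by (intro DERIV_add DERIV_cmult w_deriv DERIV_diff \<eta>_deriv DERIV_const)
  moreover have "((\<lambda>z. \<kappa> * w2 z) has_real_derivative \<kappa> * w3 z) (at z)"
    by (intro DERIV_cmult w2_deriv)
  then have "((\<lambda>z. \<gamma> * w z + s * (\<eta> z - e)) has_real_derivative \<kappa> * w3 z) (at z)"
    by (simp add: w2_eq)
  ultimately have "\<kappa> * w3 z = \<gamma> * w1 z + s * \<eta>1 z"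
    using DERIV_unique by force
  then show ?thesis
    using \<theta>_pos[of z] \<kappa>_pos by (simp add: \<eta>1_eq Q_def field_simps power2_eq_square)
qed

lemma w2_lim: "(w2 \<longlongrightarrow> 0) at_top" "(w2 \<longlongrightarrow> 0) at_bot"
proof -
  have w2: "w2 = (\<lambda>z. (\<gamma> * w z + s * (\<eta> z - e)) / \<kappa>)"
    using w2_eq \<kappa>_pos by (auto simp: field_simps)
  show "(w2 \<longlongrightarrow> 0) at_top" "(w2 \<longlongrightarrow> 0) at_bot"
    unfolding w2 using w_lim \<eta>_lim \<kappa>_pos by (auto intro!: tendsto_eq_intros)
qed

lemma w1_lim: "(w1 \<longlongrightarrow> 0) at_top" "(w1 \<longlongrightarrow> 0) at_bot"
  using deriv_tendsto_0_at_top[OF w_deriv w1_deriv w_lim(1) w2_lim(1)]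
    deriv_tendsto_0_at_bot[OF w_deriv w1_deriv w_lim(2) w2_lim(2)] by blast+

lemma w1_decaying: "decaying_solution (\<lambda>z. Q 0 z / \<kappa>) w1"
  unfolding decaying_solution_def
  using w1_deriv w2_deriv w3_eq w1_lim w2_lim by blast

text \<open>Along the wave, w and \<kappa> w'' are functions of \<eta>, namely Wf and Ff, and Gf is a primitive of
  Wf' Ff chosen to vanish at e; then \<kappa>/2 w'^2 - Gf \<eta> is a first integral.\<close>
definition "Wf x = (x powr (-(\<nu>+2)) - e powr (-(\<nu>+2))) / s"
definition "Wf' x = -(\<nu>+2) * x powr (-(\<nu>+3)) / s"
definition "Ff x = \<gamma> * Wf x + s * (x - e)"
definition "Ff' x = \<gamma> * Wf' x + s"
definition "Hf x = (\<nu>+2)/(\<nu>+1) * x powr (-(\<nu>+1)) - e * x powr (-(\<nu>+2))"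
definition "Gf x = \<gamma>/2 * (Wf x)\<^sup>2 + Hf x - Hf e"
definition "Gf' x = Wf' x * Ff x"

lemma w_eq_Wf: "w z = Wf (\<eta> z)"
  using w_\<eta>_relation[of z] s_nonzero by (simp add: Wf_def field_simps)

lemma w2_eq_Ff: "\<kappa> * w2 z = Ff (\<eta> z)"
  using w2_eq[of z] by (simp add: Ff_def w_eq_Wf)

lemma Wf_e: "Wf e = 0" and Ff_e: "Ff e = 0" and Gf_e: "Gf e = 0"
  by (simp_all add: Wf_def Ff_def Gf_def)

lemma Wf_deriv: "0 < x \<Longrightarrow> (Wf has_real_derivative Wf' x) (at x)"
proof -
  assume x: "0 < x"
  have "((\<lambda>x. (x powr (-(\<nu>+2)) - e powr (-(\<nu>+2))) / s) has_real_derivative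
        ((-(\<nu>+2)) * x powr (-(\<nu>+2) - real 1) * 1 - 0) / s) (at x)"
    by (intro DERIV_cdivide DERIV_diff DERIV_fun_powr DERIV_ident DERIV_const x)
  then show ?thesis unfolding Wf_def[abs_def] Wf'_def by (simp add: algebra_simps)
qed

lemma Wf'_nonzero: "0 < x \<Longrightarrow> Wf' x \<noteq> 0"
  using \<nu>_gt s_nonzero by (simp add: Wf'_def)

lemma Ff_deriv: "0 < x \<Longrightarrow> (Ff has_real_derivative Ff' x) (at x)"
  unfolding Ff_def[abs_def] Ff'_def by (auto intro!: derivative_eq_intros Wf_deriv)

lemma Gf_deriv: "0 < x \<Longrightarrow> (Gf has_real_derivative Gf' x) (at x)"
proof -
  assume x: "0 < x"
  have "((\<lambda>x. (Wf x)\<^sup>2) has_real_derivative 2 * Wf x * Wf' x) (at x)"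
    using DERIV_power[OF Wf_deriv[OF x], of 2] by (simp add: algebra_simps)
  then have "(Gf has_real_derivative \<gamma>/2 * (2 * Wf x * Wf' x)
      + ((\<nu>+2)/(\<nu>+1) * ((-(\<nu>+1)) * x powr (-(\<nu>+1) - real 1) * 1)
        - e * ((-(\<nu>+2)) * x powr (-(\<nu>+2) - real 1) * 1)) - 0) (at x)"
    unfolding Gf_def[abs_def] Hf_def
    by (intro DERIV_diff DERIV_add DERIV_cmult DERIV_fun_powr DERIV_ident DERIV_const x)
  moreover have exps: "-(\<nu>+1) - real 1 = -(\<nu>+2)" "-(\<nu>+2) - real 1 = -(\<nu>+3)" by simp_all
  moreover have "\<gamma>/2 * (2 * Wf x * Wf' x) + ((\<nu>+2)/(\<nu>+1) * ((-(\<nu>+1)) * x powr (-(\<nu>+2)) * 1)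
        - e * ((-(\<nu>+2)) * x powr (-(\<nu>+3)) * 1)) - 0 = Gf' x"
  proof -
    have "-(\<nu>+2) = -(\<nu>+3) + 1" by simp
    then have split: "x powr (-(\<nu>+2)) = x powr (-(\<nu>+3)) * x"
      using x by (simp only: powr_add powr_one less_imp_le)
    have cancel: "(\<nu>+2)/(\<nu>+1) * ((-(\<nu>+1)) * x powr (-(\<nu>+2)) * 1) = -(\<nu>+2) * x powr (-(\<nu>+2))"
      using \<nu>_gt by (simp add: field_simps)
    have "\<gamma>/2 * (2 * Wf x * Wf' x) + (-(\<nu>+2) * (x powr (-(\<nu>+3)) * x)
        - e * ((-(\<nu>+2)) * x powr (-(\<nu>+3)) * 1)) - 0 = Gf' x"
      unfolding Gf'_def Ff_def Wf'_def using s_nonzero by (simp add: field_simps)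
    then show ?thesis unfolding cancel using split by simp
  qed
  ultimately show ?thesis unfolding exps by simp
qed

lemma energy: "\<kappa> / 2 * (w1 z)\<^sup>2 = Gf (\<eta> z)"
proof -
  define E where "E z = \<kappa> / 2 * (w1 z)\<^sup>2 - Gf (\<eta> z)" for z
  have "Wf' (\<eta> z) = - \<theta> z / s" for z
    by (simp add: Wf'_def \<theta>_def algebra_simps)
  then have "Wf' (\<eta> z) * \<eta>1 z = w1 z" for z
    using s_nonzero \<theta>_pos[of z] by (simp add: \<eta>1_eq)
  then have "\<kappa> / 2 * (2 * w1 z * w2 z) - Gf' (\<eta> z) * \<eta>1 z = 0" for z
    using w2_eq_Ff[of z] by (simp add: Gf'_def algebra_simps)
  moreover have "(E has_real_derivative \<kappa> / 2 * (2 * w1 z * w2 z) - Gf' (\<eta> z) * \<eta>1 z) (at z)" for z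
    unfolding E_def[abs_def]
    by (auto intro!: derivative_eq_intros w1_deriv DERIV_chain2[OF Gf_deriv \<eta>_deriv] \<eta>_pos
        simp: power2_eq_square)
  ultimately have E_deriv: "(E has_real_derivative 0) (at z)" for z by simp
  have "isCont Gf e" using Gf_deriv[OF e_pos] by (rule DERIV_isCont)
  then have "(E \<longlongrightarrow> \<kappa> / 2 * 0\<^sup>2 - Gf e) at_top"
    unfolding E_def by (intro tendsto_intros w1_lim isCont_tendsto_compose[OF _ \<eta>_lim(1)])
  moreover have "E y = E z" for y
    using DERIV_isconst_all[of E y z] E_deriv by blast
  then have "(E \<longlongrightarrow> E z) at_top"
    by (intro tendsto_eventually always_eventually) simp
  ultimately have "E z = 0"
    using tendsto_unique[OF trivial_limit_at_top_linorder] Gf_e by simp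
  then show ?thesis by (simp add: E_def)
qed

lemma Ff'_injective: "0 < x \<Longrightarrow> x < y \<Longrightarrow> Ff' x \<noteq> Ff' y"
proof -
  assume xy: "0 < x" "x < y"
  have "y powr (-(\<nu>+3)) < x powr (-(\<nu>+3))" using xy \<nu>_gt by (intro powr_less_mono2_neg) auto
  moreover have "\<gamma> * (\<nu>+2) / s \<noteq> 0" using \<gamma>_pos \<nu>_gt s_nonzero by simp
  moreover have "Ff' x - Ff' y = -(\<gamma> * (\<nu>+2) / s) * (x powr (-(\<nu>+3)) - y powr (-(\<nu>+3)))"
    unfolding Ff'_def Wf'_def using s_nonzero by (simp add: field_simps)
  ultimately show ?thesis by auto
qed

lemma Ff_no_three_zeros:
  assumes "0 < x" "x < y" "y < z" "Ff x = 0" "Ff y = 0" "Ff z = 0"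
  shows False
proof -
  obtain t1 where "x < t1" "t1 < y" "Ff' t1 = 0" using Rolle_pos_deriv[of x y Ff Ff'] assms Ff_deriv by auto
  moreover obtain t2 where "y < t2" "t2 < z" "Ff' t2 = 0" using Rolle_pos_deriv[of y z Ff Ff'] assms Ff_deriv by auto
  ultimately show False using Ff'_injective[of t1 t2] assms by auto
qed

lemma Ff_zero_between_Gf_zeros:
  assumes "0 < a" "a < b" "Gf a = 0" "Gf b = 0"
  obtains t where "a < t" "t < b" "Ff t = 0"
proof -
  obtain t where "a < t" "t < b" "Gf' t = 0" using Rolle_pos_deriv[of a b Gf Gf'] assms Gf_deriv by auto
  then show thesis using that Wf'_nonzero[of t] assms(1) by (simp add: Gf'_def)
qed

lemma Gf_no_three_zeros:
  assumes "0 < a" "a < b" "b < c" "Gf a = 0" "Gf b = 0" "Gf c = 0" "e \<in> {a, b, c}"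
  shows False
proof -
  obtain t1 where t1: "a < t1" "t1 < b" "Ff t1 = 0" using Ff_zero_between_Gf_zeros assms by blast
  obtain t2 where t2: "b < t2" "t2 < c" "Ff t2 = 0" using Ff_zero_between_Gf_zeros[of b c] assms by auto
  show False
    using assms(7) Ff_no_three_zeros[of a t1 t2] Ff_no_three_zeros[of t1 b t2]
      Ff_no_three_zeros[of t1 t2 c] t1 t2 assms(1-3) Ff_e by auto
qed

lemma Gf_zero_unique:
  assumes "0 < x" "0 < y" "x \<noteq> e" "y \<noteq> e" "Gf x = 0" "Gf y = 0"
  shows "x = y"
proof -
  have False if "0 < x" "x < y" "x \<noteq> e" "y \<noteq> e" "Gf x = 0" "Gf y = 0" for x y
    using that Gf_no_three_zeros[of e x y] Gf_no_three_zeros[of x e y] Gf_no_three_zeros[of x y e]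
      Gf_e e_pos by (cases "e < x"; cases "e < y") auto
  then show ?thesis using assms by (metis linorder_neqE_linordered_idom)
qed

lemma Ff_Gf_no_common_zero:
  assumes "0 < x" "x \<noteq> e" "Ff x = 0" "Gf x = 0"
  shows False
proof (cases "x < e")
  case True
  then obtain t where "x < t" "t < e" "Ff t = 0" using Ff_zero_between_Gf_zeros[of x e] assms Gf_e by auto
  then show False using Ff_no_three_zeros[of x t e] assms Ff_e by auto
next
  case False
  then obtain t where "e < t" "t < x" "Ff t = 0"
    using Ff_zero_between_Gf_zeros[of e x] assms Gf_e e_pos by force
  then show False using Ff_no_three_zeros[of e t x] assms Ff_e e_pos by auto
qed

lemma Wf_eq_0_iff: "0 < x \<Longrightarrow> Wf x = 0 \<longleftrightarrow> x = e"
  using powr_less_mono2_neg[of "-(\<nu>+2)" x e] powr_less_mono2_neg[of "-(\<nu>+2)" e x] \<nu>_gt e_pos s_nonzero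
  by (cases x e rule: linorder_cases) (auto simp: Wf_def)

lemma \<eta>_bounds:
  obtains m M where "0 < m" "m \<le> e" "e \<le> M" "\<And>z. m \<le> \<eta> z \<and> \<eta> z \<le> M"
proof -
  have lim: "(\<eta> \<longlongrightarrow> e) at_infinity"
    by (rule tendsto_at_infinity_real[OF \<eta>_lim])
  obtain m where "0 < m" "\<And>z. m \<le> \<eta> z"
    using pos_lower_bound_if_tendsto_at_infinity[OF continuous_\<eta> lim e_pos \<eta>_pos] by blast
  moreover obtain M where "\<And>z. \<eta> z \<le> M"
    using bounded_range_if_tendsto_at_infinity[OF continuous_\<eta> lim]
    unfolding bounded_real by (metis abs_le_D1 rangeI)
  ultimately show thesis
    using that[of "min m e" "max M e"] e_pos by (force simp: min_le_iff_disj le_max_iff_disj)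
qed

lemma Wf_lower_bound:
  assumes "0 < m" "m \<le> e" "e \<le> M"
  obtains L where "0 < L" "\<And>x. x \<in> {m..M} \<Longrightarrow> L * \<bar>x - e\<bar> \<le> \<bar>Wf x\<bar>"
proof -
  have "continuous_on {m..M} (\<lambda>x. \<bar>Wf' x\<bar>)"
    unfolding Wf'_def using assms(1) s_nonzero by (intro continuous_intros) auto
  moreover have "{m..M} \<noteq> {}" using assms by simp
  ultimately obtain x0 where x0: "x0 \<in> {m..M}" "\<And>y. y \<in> {m..M} \<Longrightarrow> \<bar>Wf' x0\<bar> \<le> \<bar>Wf' y\<bar>"
    using continuous_attains_inf[OF compact_Icc] by blast
  have "\<bar>Wf' x0\<bar> * \<bar>x - e\<bar> \<le> \<bar>Wf x\<bar>" if x: "x \<in> {m..M}" for x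
  proof -
    have "0 < y" if "min x e \<le> y" "y \<le> max x e" for y
      using that x assms by auto
    then obtain \<xi> where \<xi>: "min x e \<le> \<xi>" "\<xi> \<le> max x e" "Wf x - Wf e = (x - e) * Wf' \<xi>"
      using MVT_between[of x e Wf Wf', OF Wf_deriv] by blast
    have "\<xi> \<in> {m..M}" using \<xi>(1,2) x assms by auto
    then have "\<bar>Wf' x0\<bar> \<le> \<bar>Wf' \<xi>\<bar>" by (rule x0(2))
    then show ?thesis using \<xi>(3) by (simp add: Wf_e abs_mult mult.commute mult_left_mono)
  qed
  moreover have "0 < \<bar>Wf' x0\<bar>" using Wf'_nonzero[of x0] x0(1) assms(1) by auto
  ultimately show thesis using that by blast
qed

lemma Gf_quadratic_bound:
  assumes "0 < m" "m \<le> e" "e \<le> M"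
  obtains B where "\<And>x. x \<in> {m..M} \<Longrightarrow> \<bar>Gf x\<bar> \<le> B * (x - e)\<^sup>2"
proof -
  have "continuous_on {m..M} Wf'" "continuous_on {m..M} Ff'"
    unfolding Ff'_def Wf'_def using assms(1) s_nonzero by (auto intro!: continuous_intros)
  then have "bounded (Wf' ` {m..M})" "bounded (Ff' ` {m..M})"
    by (auto intro: compact_imp_bounded compact_continuous_image)
  then obtain B1 B2 where B1: "\<And>x. x \<in> {m..M} \<Longrightarrow> \<bar>Wf' x\<bar> \<le> B1"
    and B2: "\<And>x. x \<in> {m..M} \<Longrightarrow> \<bar>Ff' x\<bar> \<le> B2"
    unfolding bounded_real by (meson imageI)
  have in_range: "y \<in> {m..M}" if "x \<in> {m..M}" "min x e \<le> y" "y \<le> max x e" for x y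
    using that assms by auto
  have pos: "0 < y" if "x \<in> {m..M}" "min x e \<le> y" "y \<le> max x e" for x y
    using in_range[OF that] assms(1) by auto
  have "\<bar>Gf x\<bar> \<le> B1 * B2 * (x - e)\<^sup>2" if x: "x \<in> {m..M}" for x
  proof -
    \<comment> \<open>Two mean value steps: Gf x = (x - e) Wf' \<xi> Ff \<xi> and Ff \<xi> = (\<xi> - e) Ff' \<zeta>.\<close>
    obtain \<xi> where \<xi>: "min x e \<le> \<xi>" "\<xi> \<le> max x e" "Gf x - Gf e = (x - e) * Gf' \<xi>"
      using MVT_between[of x e Gf Gf', OF Gf_deriv[OF pos[OF x]]] by blast
    have \<xi>_range: "\<xi> \<in> {m..M}" using in_range[OF x \<xi>(1,2)] .
    obtain \<zeta> where \<zeta>: "min \<xi> e \<le> \<zeta>" "\<zeta> \<le> max \<xi> e" "Ff \<xi> - Ff e = (\<xi> - e) * Ff' \<zeta>"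
      using MVT_between[of \<xi> e Ff Ff', OF Ff_deriv[OF pos[OF \<xi>_range]]] by blast
    have "\<bar>\<xi> - e\<bar> \<le> \<bar>x - e\<bar>"
      using \<xi>(1,2) unfolding min_def max_def by (auto split: if_splits)
    then have "\<bar>\<xi> - e\<bar> * \<bar>Ff' \<zeta>\<bar> \<le> \<bar>x - e\<bar> * B2"
      using B2[OF in_range[OF \<xi>_range \<zeta>(1,2)]] by (intro mult_mono) auto
    then have "\<bar>Wf' \<xi>\<bar> * (\<bar>\<xi> - e\<bar> * \<bar>Ff' \<zeta>\<bar>) \<le> B1 * (\<bar>x - e\<bar> * B2)"
      by (rule mult_mono[OF B1[OF \<xi>_range]]) (use B1[OF \<xi>_range] in auto)
    then have "\<bar>x - e\<bar> * (\<bar>Wf' \<xi>\<bar> * (\<bar>\<xi> - e\<bar> * \<bar>Ff' \<zeta>\<bar>)) \<le> \<bar>x - e\<bar> * (B1 * (\<bar>x - e\<bar> * B2))"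
      by (intro mult_left_mono) auto
    moreover have "\<bar>Gf x\<bar> = \<bar>x - e\<bar> * (\<bar>Wf' \<xi>\<bar> * (\<bar>\<xi> - e\<bar> * \<bar>Ff' \<zeta>\<bar>))"
      using \<xi>(3) \<zeta>(3) by (simp add: Gf_e Ff_e Gf'_def abs_mult)
    moreover have "\<bar>x - e\<bar> * (B1 * (\<bar>x - e\<bar> * B2)) = B1 * B2 * (x - e)\<^sup>2"
      by (simp add: power2_eq_square algebra_simps)
    ultimately show ?thesis by simp
  qed
  then show thesis using that by blast
qed

lemma w1_sq_le_w_sq:
  obtains K where "\<And>z. (w1 z)\<^sup>2 \<le> K * (w z)\<^sup>2"
proof -
  obtain m M where mM: "0 < m" "m \<le> e" "e \<le> M" "\<And>z. \<eta> z \<in> {m..M}"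
    using \<eta>_bounds by (metis atLeastAtMost_iff)
  obtain L where L: "0 < L" "\<And>x. x \<in> {m..M} \<Longrightarrow> L * \<bar>x - e\<bar> \<le> \<bar>Wf x\<bar>"
    using Wf_lower_bound[OF mM(1-3)] by blast
  obtain B where B: "\<And>x. x \<in> {m..M} \<Longrightarrow> \<bar>Gf x\<bar> \<le> B * (x - e)\<^sup>2"
    using Gf_quadratic_bound[OF mM(1-3)] by blast
  have "(w1 z)\<^sup>2 \<le> (2 / \<kappa> * \<bar>B\<bar> / L\<^sup>2) * (w z)\<^sup>2" for z
  proof -
    have "(L * \<bar>\<eta> z - e\<bar>)\<^sup>2 \<le> \<bar>w z\<bar>\<^sup>2"
      using L(2)[OF mM(4)[of z]] L(1) by (intro power_mono) (auto simp: w_eq_Wf)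
    then have "(\<eta> z - e)\<^sup>2 \<le> (w z)\<^sup>2 / L\<^sup>2"
      using L(1) by (simp add: field_simps power_mult_distrib)
    have "(w1 z)\<^sup>2 = 2 / \<kappa> * Gf (\<eta> z)"
      using energy[of z] \<kappa>_pos by (simp add: field_simps)
    also have "\<dots> \<le> 2 / \<kappa> * (\<bar>B\<bar> * (\<eta> z - e)\<^sup>2)"
      using B[OF mM(4)[of z]] mult_right_mono[OF abs_ge_self[of B] zero_le_power2[of "\<eta> z - e"]] \<kappa>_pos
      by (intro mult_left_mono) auto
    also have "\<dots> \<le> 2 / \<kappa> * (\<bar>B\<bar> * ((w z)\<^sup>2 / L\<^sup>2))"
      using \<open>(\<eta> z - e)\<^sup>2 \<le> (w z)\<^sup>2 / L\<^sup>2\<close> \<kappa>_pos by (intro mult_left_mono) auto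
    finally show ?thesis by (simp add: field_simps)
  qed
  then show thesis using that by blast
qed

text \<open>Since |w'| \<le> C |w|, the nonzero solution w of this linear differential inequality never
  vanishes.\<close>
lemma w_nonzero: "w z \<noteq> 0"
proof -
  have "\<exists>z0. w z0 \<noteq> 0"
  proof (rule ccontr)
    assume "\<not> ?thesis"
    then have "w z = 0" and "\<eta> z = e" for z
      using w_eq_Wf[of z] Wf_eq_0_iff[OF \<eta>_pos] by auto
    then show False using nonconstant by auto
  qed
  then obtain z0 where "w z0 \<noteq> 0" by blast
  moreover obtain K where "\<And>z. (w1 z)\<^sup>2 \<le> K * (w z)\<^sup>2" using w1_sq_le_w_sq by blast
  ultimately show ?thesis using nonvanishing_if_deriv_sq_le[OF w_deriv] by blast
qed

lemma \<eta>_ne_e: "\<eta> z \<noteq> e"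
  using w_nonzero[of z] Wf_eq_0_iff[OF \<eta>_pos] by (simp add: w_eq_Wf)

lemma w_sq_deriv: "((\<lambda>z. (w z)\<^sup>2) has_real_derivative 2 * w z * w1 z) (at z)"
  using DERIV_power[OF w_deriv[of z], of 2] by (simp add: algebra_simps)

text \<open>At a critical point of w, \<eta> is a zero \<noteq> e of Gf, and Gf has only one such zero.\<close>
lemma w1_zero_imp_w_sq_eq:
  assumes "w1 z = 0" "w1 z' = 0"
  shows "(w z)\<^sup>2 = (w z')\<^sup>2"
proof -
  have "Gf (\<eta> z) = 0" "Gf (\<eta> z') = 0" using energy[of z] energy[of z'] assms by auto
  then have "\<eta> z = \<eta> z'" using Gf_zero_unique \<eta>_pos \<eta>_ne_e by blast
  then show ?thesis by (simp add: w_eq_Wf)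
qed

lemma w_sq_max:
  obtains zmax where "\<And>y. (w y)\<^sup>2 \<le> (w zmax)\<^sup>2" "w1 zmax = 0"
proof -
  have "((\<lambda>z. (w z)\<^sup>2) \<longlongrightarrow> 0) at_infinity"
    using tendsto_at_infinity_real[OF w_lim] by (auto intro: tendsto_eq_intros)
  moreover have "continuous_on UNIV (\<lambda>z. (w z)\<^sup>2)"
    using w_sq_deriv by (metis DERIV_isCont continuous_at_imp_continuous_on)
  moreover have "0 < (w 0)\<^sup>2" using w_nonzero[of 0] by simp
  ultimately obtain zmax where zmax: "\<And>y. (w y)\<^sup>2 \<le> (w zmax)\<^sup>2"
    using attains_sup_if_tendsto_0_at_infinity by blast
  then have "2 * w zmax * w1 zmax = 0"
    using DERIV_local_max[OF w_sq_deriv zero_less_one] by blast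
  then show thesis using that[OF zmax] w_nonzero[of zmax] by simp
qed

lemma w_sq_le_at_w1_zero:
  assumes "w1 z = 0"
  shows "(w y)\<^sup>2 \<le> (w z)\<^sup>2"
proof -
  obtain zmax where "\<And>y. (w y)\<^sup>2 \<le> (w zmax)\<^sup>2" "w1 zmax = 0" using w_sq_max by blast
  then show ?thesis using w1_zero_imp_w_sq_eq[OF assms] by simp
qed

lemma w1_zero_if_w_sq_local_min:
  assumes "0 < d" "\<forall>x. \<bar>y - x\<bar> < d \<longrightarrow> (w y)\<^sup>2 \<le> (w x)\<^sup>2"
  shows "w1 y = 0"
  using DERIV_local_min[OF w_sq_deriv assms] w_nonzero[of y] by simp

lemma w1_zero_if_w_sq_locally_const:
  assumes "0 < d" "\<forall>x. \<bar>y - x\<bar> < d \<longrightarrow> (w y)\<^sup>2 = (w x)\<^sup>2"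
  shows "w1 y = 0"
  using DERIV_local_const[OF w_sq_deriv assms] w_nonzero[of y] by simp

text \<open>If w^2 were constant on an interval, w' and w'' would vanish there, making \<eta> a common zero
  of Ff and Gf.\<close>
lemma w_sq_not_constant:
  assumes "a < b" and const: "\<And>y. y \<in> {a..b} \<Longrightarrow> (w y)\<^sup>2 = c"
  shows False
proof -
  define m where "m = (a + b) / 2"
  have w1_inside: "w1 y = 0" if "\<bar>m - y\<bar> < (b - a) / 2" for y
  proof (rule w1_zero_if_w_sq_locally_const)
    have "a < y" "y < b" using that by (auto simp: m_def abs_less_iff field_simps)
    then show "0 < min (y - a) (b - y)" by simp
    show "\<forall>x. \<bar>y - x\<bar> < min (y - a) (b - y) \<longrightarrow> (w y)\<^sup>2 = (w x)\<^sup>2"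
      using that const by (auto simp: m_def abs_less_iff)
  qed
  then have "\<forall>y. \<bar>m - y\<bar> < (b - a) / 2 \<longrightarrow> w1 m = w1 y"
    using \<open>a < b\<close> by simp
  moreover have "0 < (b - a) / 2" using \<open>a < b\<close> by simp
  ultimately have "w2 m = 0"
    using DERIV_local_const[OF w1_deriv] by blast
  then have "Ff (\<eta> m) = 0" using w2_eq_Ff[of m] by simp
  moreover have "Gf (\<eta> m) = 0"
    using energy[of m] w1_inside[of m] \<open>a < b\<close> by simp
  ultimately show False using Ff_Gf_no_common_zero \<eta>_pos \<eta>_ne_e by blast
qed

text \<open>Between two critical points, where w^2 takes its maximum c, the minimum of w^2 is either
  an interior critical point below c or w^2 is constant.\<close>
lemma w1_no_two_zeros:
  assumes "w1 a = 0" "w1 b = 0" "a < b"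
  shows False
proof -
  define c where "c = (w a)\<^sup>2"
  have "continuous_on {a..b} (\<lambda>z. (w z)\<^sup>2)"
    using w_sq_deriv by (metis DERIV_isCont continuous_at_imp_continuous_on)
  moreover have "{a..b} \<noteq> {}" using \<open>a < b\<close> by simp
  ultimately obtain zm where zm: "zm \<in> {a..b}" "\<And>y. y \<in> {a..b} \<Longrightarrow> (w zm)\<^sup>2 \<le> (w y)\<^sup>2"
    using continuous_attains_inf[OF compact_Icc] by blast
  show False
  proof (cases "(w zm)\<^sup>2 < c")
    case True
    have "(w b)\<^sup>2 = c" using w1_zero_imp_w_sq_eq[OF assms(1,2)] by (simp add: c_def)
    then have "a < zm" "zm < b" using True zm(1) by (auto simp: c_def le_less)
    then have "w1 zm = 0"
      using zm(2) by (intro w1_zero_if_w_sq_local_min[of "min (zm - a) (b - zm)"]) (auto simp: abs_less_iff)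
    then show False using True w1_zero_imp_w_sq_eq[OF assms(1)] by (simp add: c_def)
  next
    case False
    then have "(w y)\<^sup>2 = c" if "y \<in> {a..b}" for y
      using zm(2)[OF that] w_sq_le_at_w1_zero[OF assms(1), of y] by (simp add: c_def)
    then show False using w_sq_not_constant[OF \<open>a < b\<close>] by blast
  qed
qed

lemma w1_unique_zero: obtains z0 where "\<And>z. z \<noteq> z0 \<Longrightarrow> w1 z \<noteq> 0"
proof -
  obtain z0 where "w1 z0 = 0" using w_sq_max by blast
  then have "w1 z \<noteq> 0" if "z \<noteq> z0" for z
    using w1_no_two_zeros[of z z0] w1_no_two_zeros[of z0 z] that by (cases "z < z0") auto
  then show thesis using that by blast
qed

lemma Q_0_less: "\<mu> < 0 \<Longrightarrow> Q 0 z < Q \<mu> z"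
proof -
  assume "\<mu> < 0"
  have "Q \<mu> z - Q 0 z = - \<mu> + s\<^sup>2 * (\<mu> / (\<theta> z * (\<mu> - \<theta> z)))"
    using \<theta>_pos[of z] \<open>\<mu> < 0\<close> by (simp add: Q_def field_simps)
  moreover have "0 < \<mu> / (\<theta> z * (\<mu> - \<theta> z))"
    using \<theta>_pos[of z] \<open>\<mu> < 0\<close> by (intro divide_neg_neg mult_pos_neg) auto
  then have "0 \<le> s\<^sup>2 * (\<mu> / (\<theta> z * (\<mu> - \<theta> z)))"
    by (intro mult_nonneg_nonneg) auto
  ultimately show ?thesis using \<open>\<mu> < 0\<close> by linarith
qed

lemma Q_strict_antimono: "\<mu>1 < \<mu>2 \<Longrightarrow> \<mu>2 < 0 \<Longrightarrow> Q \<mu>2 z < Q \<mu>1 z"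
proof -
  assume \<mu>: "\<mu>1 < \<mu>2" "\<mu>2 < 0"
  have "\<mu>1 - \<theta> z \<noteq> 0" "\<mu>2 - \<theta> z \<noteq> 0" using \<theta>_pos[of z] \<mu> by auto
  then have "s\<^sup>2 / (\<mu>1 - \<theta> z) - s\<^sup>2 / (\<mu>2 - \<theta> z)
      = s\<^sup>2 * ((\<mu>2 - \<mu>1) / ((\<mu>1 - \<theta> z) * (\<mu>2 - \<theta> z)))"
    by (simp add: field_simps)
  then have "Q \<mu>1 z - Q \<mu>2 z = (\<mu>2 - \<mu>1) + s\<^sup>2 * ((\<mu>2 - \<mu>1) / ((\<mu>1 - \<theta> z) * (\<mu>2 - \<theta> z)))"
    by (simp add: Q_def)
  moreover have "0 < (\<mu>2 - \<mu>1) / ((\<mu>1 - \<theta> z) * (\<mu>2 - \<theta> z))"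
    using \<theta>_pos[of z] \<mu> by (intro divide_pos_pos mult_neg_neg) auto
  then have "0 \<le> s\<^sup>2 * ((\<mu>2 - \<mu>1) / ((\<mu>1 - \<theta> z) * (\<mu>2 - \<theta> z)))"
    by (intro mult_nonneg_nonneg) auto
  ultimately show ?thesis using \<mu> by linarith
qed

lemma gen_eigenfun_decaying:
  assumes "gen_eigenfun \<beta> \<nu> \<kappa> s \<eta> \<mu> M"
  shows "decaying_solution (\<lambda>z. Q \<mu> z / \<kappa>) M"
proof -
  obtain M' M'' where "\<forall>z. (M has_real_derivative M' z) (at z)" "\<forall>z. (M' has_real_derivative M'' z) (at z)"
    and ode: "\<forall>z. \<kappa> * M'' z = (gam \<beta> \<nu> - \<mu> + s\<^sup>2 / (\<mu> - (\<nu>+2) * \<eta> z powr (-(\<nu>+3)))) * M z"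
    and "(M \<longlongrightarrow> 0) at_top" "(M \<longlongrightarrow> 0) at_bot" "(M' \<longlongrightarrow> 0) at_top" "(M' \<longlongrightarrow> 0) at_bot"
    using assms unfolding gen_eigenfun_def by blast
  moreover have "M'' z = Q \<mu> z / \<kappa> * M z" for z
    using ode \<kappa>_pos by (simp add: Q_def \<theta>_def \<gamma>_def field_simps)
  ultimately show ?thesis unfolding decaying_solution_def by blast
qed

text \<open>Since Q \<mu> > Q 0 for \<mu> < 0, Sturm comparison with w', whose only zero is z0, shows that
  an eigenfunction does not change sign and is nonzero at z0.\<close>
lemma eigenfunction_sign_definite:
  assumes "\<mu> < 0" "gen_eigenfun \<beta> \<nu> \<kappa> s \<eta> \<mu> M" "\<And>z. z \<noteq> z0 \<Longrightarrow> w1 z \<noteq> 0"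
  shows "\<exists>c. (\<forall>x. 0 \<le> c * M x) \<and> 0 < c * M z0"
proof (rule sturm_sign_definite[OF gen_eigenfun_decaying[OF assms(2)] w1_decaying _ assms(3)])
  show "Q 0 x / \<kappa> < Q \<mu> x / \<kappa>" for x
    using Q_0_less[OF assms(1)] \<kappa>_pos by (simp add: divide_strict_right_mono)
  show "M \<noteq> (\<lambda>x. 0)" using assms(2) by (simp add: gen_eigenfun_def)
qed

lemma negative_eigenvalue_unique:
  assumes "\<mu>1 < 0" "\<mu>2 < 0" "gen_eigenfun \<beta> \<nu> \<kappa> s \<eta> \<mu>1 M1" "gen_eigenfun \<beta> \<nu> \<kappa> s \<eta> \<mu>2 M2"
  shows "\<mu>1 = \<mu>2"
proof -
  obtain z0 where z0: "\<And>z. z \<noteq> z0 \<Longrightarrow> w1 z \<noteq> 0" using w1_unique_zero by blast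
  have False if \<mu>: "\<mu>1 < \<mu>2" "\<mu>2 < 0" and eig: "gen_eigenfun \<beta> \<nu> \<kappa> s \<eta> \<mu>1 M1"
    "gen_eigenfun \<beta> \<nu> \<kappa> s \<eta> \<mu>2 M2" for \<mu>1 \<mu>2 M1 M2
  proof -
    obtain c1 where c1: "0 < c1 * M1 z0"
      using eigenfunction_sign_definite[OF _ eig(1) z0] \<mu> by force
    obtain c2 where c2: "\<And>x. 0 \<le> c2 * M2 x" "0 < c2 * M2 z0"
      using eigenfunction_sign_definite[OF \<mu>(2) eig(2) z0] by blast
    have "decaying_solution (\<lambda>z. Q \<mu>1 z / \<kappa>) (\<lambda>x. c1 * M1 x)"
      "decaying_solution (\<lambda>z. Q \<mu>2 z / \<kappa>) (\<lambda>x. c2 * M2 x)"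
      using eig by (auto intro: decaying_solution_scale gen_eigenfun_decaying)
    moreover have "Q \<mu>2 x / \<kappa> < Q \<mu>1 x / \<kappa>" for x
      using Q_strict_antimono[OF \<mu>] \<kappa>_pos by (simp add: divide_strict_right_mono)
    ultimately show False
      using sturm_no_nonneg_comparison c1 c2 by blast
  qed
  then show ?thesis using assms by (metis linorder_neqE_linordered_idom)
qed

lemma continuous_\<theta>: "continuous_on UNIV \<theta>"
proof -
  have "\<eta> z \<noteq> 0" for z using \<eta>_pos[of z] by simp
  then show ?thesis
    unfolding \<theta>_def[abs_def] using continuous_\<eta> by (auto intro!: continuous_intros)
qed

lemma neg_le_abs_diff_\<theta>: "\<mu> < 0 \<Longrightarrow> - \<mu> \<le> \<bar>\<mu> - \<theta> z\<bar>"
  using \<theta>_pos[of z] by simp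

lemma continuous_Q: "\<mu> < 0 \<Longrightarrow> continuous_on UNIV (Q \<mu>)"
proof -
  assume "\<mu> < 0"
  then have "\<mu> - \<theta> z \<noteq> 0" for z using \<theta>_pos[of z] by simp
  then show ?thesis
    unfolding Q_def[abs_def] using continuous_\<theta> by (intro continuous_intros) auto
qed

lemma abs_Q_le: "\<mu> < 0 \<Longrightarrow> \<bar>Q \<mu> z\<bar> \<le> \<gamma> + \<bar>\<mu>\<bar> + s\<^sup>2 / (- \<mu>)"
proof -
  assume "\<mu> < 0"
  then have "s\<^sup>2 / \<bar>\<mu> - \<theta> z\<bar> \<le> s\<^sup>2 / (- \<mu>)"
    using neg_le_abs_diff_\<theta>[of \<mu> z] by (intro divide_left_mono mult_pos_pos) auto
  then have "\<bar>s\<^sup>2 / (\<mu> - \<theta> z)\<bar> \<le> s\<^sup>2 / (- \<mu>)" by simp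
  then show ?thesis unfolding Q_def using \<gamma>_pos by linarith
qed

lemma Ls_eigenpair_if_gen_eigenfun:
  assumes "\<mu> < 0" and eig: "gen_eigenfun \<beta> \<nu> \<kappa> s \<eta> \<mu> M"
  shows "Ls_eigenpair \<beta> \<nu> \<kappa> s \<eta> \<mu> M (\<lambda>z. s * M z / (\<mu> - (\<nu>+2) * \<eta> z powr (-(\<nu>+3))))"
proof -
  obtain M' M'' where M': "\<And>z. (M has_real_derivative M' z) (at z)"
    and M'': "\<And>z. (M' has_real_derivative M'' z) (at z)"
    and ode: "\<And>z. \<kappa> * M'' z = (\<gamma> - \<mu> + s\<^sup>2 / (\<mu> - \<theta> z)) * M z"
    and lim: "(M \<longlongrightarrow> 0) at_top" "(M \<longlongrightarrow> 0) at_bot" "(M' \<longlongrightarrow> 0) at_top" "(M' \<longlongrightarrow> 0) at_bot"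
    and "sq_integrable M" "M \<noteq> (\<lambda>z. 0)"
    using eig unfolding gen_eigenfun_def \<theta>_def \<gamma>_def by blast
  have denom_nonzero: "\<mu> - \<theta> z \<noteq> 0" for z using \<theta>_pos[of z] \<open>\<mu> < 0\<close> by simp
  have q_ode: "M'' z = Q \<mu> z / \<kappa> * M z" for z
    using ode[of z] \<kappa>_pos by (simp add: Q_def field_simps)
  have q_bound: "\<bar>Q \<mu> z / \<kappa>\<bar> \<le> (\<gamma> + \<bar>\<mu>\<bar> + s\<^sup>2 / (- \<mu>)) / \<kappa>" for z
    using abs_Q_le[OF \<open>\<mu> < 0\<close>, of z] \<kappa>_pos by (simp add: divide_right_mono)
  have q_cont: "continuous_on UNIV (\<lambda>z. Q \<mu> z / \<kappa>)"
    using continuous_Q[OF \<open>\<mu> < 0\<close>] \<kappa>_pos by (intro continuous_intros) auto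
  note derivs = sq_integrable_derivs_if_ode[OF M' M'' q_ode q_cont q_bound lim \<open>sq_integrable M\<close>]
  define V where "V z = s * M z / (\<mu> - \<theta> z)" for z
  have "sq_integrable V"
  proof (rule sq_integrable_if_sq_le[OF _ \<open>sq_integrable M\<close>])
    show "continuous_on UNIV V"
      unfolding V_def[abs_def] using M' continuous_\<theta> denom_nonzero
      by (intro continuous_intros) (auto intro: DERIV_isCont continuous_at_imp_continuous_on)
    show "(V z)\<^sup>2 \<le> s\<^sup>2 / \<mu>\<^sup>2 * (M z)\<^sup>2" for z
    proof -
      have "\<mu>\<^sup>2 \<le> (\<mu> - \<theta> z)\<^sup>2"
        using neg_le_abs_diff_\<theta>[OF \<open>\<mu> < 0\<close>, of z] \<open>\<mu> < 0\<close>
        by (metis abs_le_square_iff abs_of_neg abs_minus)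
      then have "(s * M z)\<^sup>2 / (\<mu> - \<theta> z)\<^sup>2 \<le> (s * M z)\<^sup>2 / \<mu>\<^sup>2"
        using \<open>\<mu> < 0\<close> by (intro divide_left_mono mult_pos_pos) auto
      then show ?thesis by (simp add: V_def power_divide power_mult_distrib)
    qed
  qed
  moreover have "\<gamma> * M z - \<kappa> * M'' z + s * V z = \<mu> * M z" for z
    using ode[of z] denom_nonzero[of z] by (simp add: V_def field_simps power2_eq_square)
  moreover have "s * M z + \<theta> z * V z = \<mu> * V z" for z
    using denom_nonzero[of z] by (simp add: V_def field_simps)
  ultimately show ?thesis
    unfolding Ls_eigenpair_def V_def \<theta>_def \<gamma>_def
    using M' M'' derivs \<open>sq_integrable M\<close> \<open>M \<noteq> (\<lambda>z. 0)\<close> by auto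
qed

end

theorem mainTheorem7:
  fixes \<beta> \<nu> \<kappa> \<eta>inf s :: real and w \<eta> :: "real \<Rightarrow> real"
  assumes "\<beta> > 0" and "\<nu> > -1" and "\<kappa> > 0" and "\<eta>inf > 0"
    and "soliton \<beta> \<nu> \<kappa> \<eta>inf s w \<eta>"
    and "\<beta> * (\<nu>+1) / (2 * (\<nu>+2) * \<eta>inf powr (\<nu>+3)) < s\<^sup>2"
    and "s\<^sup>2 < \<beta> / \<eta>inf powr (\<nu>+3)"
  shows "(\<forall>\<mu>1 \<mu>2 M1 M2. \<mu>1 < 0 \<and> \<mu>2 < 0 \<and>
            gen_eigenfun \<beta> \<nu> \<kappa> s \<eta> \<mu>1 M1 \<and> gen_eigenfun \<beta> \<nu> \<kappa> s \<eta> \<mu>2 M2 \<longrightarrow> \<mu>1 = \<mu>2)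
       \<and> (\<forall>\<mu> M. \<mu> < 0 \<and> gen_eigenfun \<beta> \<nu> \<kappa> s \<eta> \<mu> M \<longrightarrow>
            Ls_eigenpair \<beta> \<nu> \<kappa> s \<eta> \<mu> M
              (\<lambda>z. s * M z / (\<mu> - (\<nu>+2) * \<eta> z powr (-(\<nu>+3)))))"
proof -
  \<comment> \<open>The bounds on s^2 are needed only to ensure s \<noteq> 0.\<close>
  have "0 < \<beta> * (\<nu>+1) / (2 * (\<nu>+2) * \<eta>inf powr (\<nu>+3))"
    using assms(1,2,4) by (intro divide_pos_pos mult_pos_pos) auto
  then have "s \<noteq> 0" using assms(6) by auto
  then interpret soliton_wave \<beta> \<nu> \<kappa> \<eta>inf s w \<eta>
    using assms by unfold_locales auto
  show ?thesis
    using negative_eigenvalue_unique Ls_eigenpair_if_gen_eigenfun by blast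
qed

end
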